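(* Let $Q=\tau(t)\partial_t+\xi(x)\partial_x+(ku+r(t,x))\partial_u$ be a nonzero vector field, with $k$ a real constant and $\tau,\xi,r$ smooth. Then there is a change of variables of the form $\bar t=T(t)$, $\bar x=X(x)$, $v=mu+Y(t,x)$, or of the form $\bar t=T(x)$, $\bar x=X(t)$, $v=mu+Y(t,x)$ (with $m$ a real constant and $T'X'm\neq0$), which reduces $Q$ to one of the following operators (written in the new variables, still denoted $t,x,u$): $$\partial_t+\partial_x+\epsilon u\partial_u\ (\epsilon=0,1);\quad \partial_t+\epsilon u\partial_u\ (\epsilon=0,1);\quad u\partial_u;\quad g(t,x)\partial_u\ \ (g\neq0).$$
   Context: These changes of variables form the equivalence group of the class of equations $u_{tx}=f(t,x,u)$ ($f_{uu}\neq0$), and vector fields of the given form are the Lie point symmetry generators of equations in this class. All considerations are local. *)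

theory Defs
  imports "HOL-Analysis.Analysis"
begin

coinductive smooth1_on :: "real set \<Rightarrow> (real \<Rightarrow> real) \<Rightarrow> bool" for S where
  "(\<forall>t\<in>S. (f has_real_derivative f' t) (at t)) \<Longrightarrow> smooth1_on S f' \<Longrightarrow> smooth1_on S f"

coinductive smooth2_on :: "(real \<times> real) set \<Rightarrow> (real \<times> real \<Rightarrow> real) \<Rightarrow> bool" for S where
  "(\<forall>p\<in>S. (f has_derivative (\<lambda>h. fa p * fst h + fb p * snd h)) (at p))
   \<Longrightarrow> smooth2_on S fa \<Longrightarrow> smooth2_on S fb \<Longrightarrow> smooth2_on S f"

text \<open>The canonical operators, as vector fields in the new variables (t,x,u), given as the
  triple of their (d_t, d_x, d_u) components; D is the (t,x)-domain on which g must be nonzero.\<close>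
definition canonical_form :: "(real \<times> real \<times> real \<Rightarrow> real \<times> real \<times> real) \<Rightarrow> (real \<times> real) set \<Rightarrow> bool" where
  "canonical_form F D \<longleftrightarrow>
     (\<exists>\<epsilon>\<in>{0,1::real}. F = (\<lambda>(t,x,u). (1, 1, \<epsilon> * u))) \<or>
     (\<exists>\<epsilon>\<in>{0,1::real}. F = (\<lambda>(t,x,u). (1, 0, \<epsilon> * u))) \<or>
     F = (\<lambda>(t,x,u). (0, 0, u)) \<or>
     (\<exists>g. (\<exists>p\<in>D. g p \<noteq> 0) \<and> F = (\<lambda>(t,x,u). (0, 0, g (t,x))))"

end

theory Submission
  imports Defs
begin

text \<open>
  A change of variables \<open>v = m u + Y\<close> removes \<open>r\<close> from \<open>Q\<close> as soon as \<open>Y\<close> solves the transport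
  equation \<open>\<tau> Y\<^sub>t + \<xi> Y\<^sub>x = k Y - r\<close>; after that only the field \<open>\<tau> \<partial>\<^sub>t + \<xi> \<partial>\<^sub>x\<close> has to be
  straightened and the whole operator rescaled.
  Near a point where \<open>\<tau> \<noteq> 0 \<noteq> \<xi>\<close>, antiderivatives \<open>A' = 1 / \<tau>\<close> and \<open>B' = 1 / \<xi>\<close> give
  \<open>T = c A\<close>, \<open>X = c B\<close>, and the transport equation becomes a linear ordinary differential equation
  along the characteristics \<open>A t - B x = const\<close>, solved by variation of constants.
  If \<open>\<tau> \<noteq> 0\<close> but \<open>\<xi>\<close> vanishes, the same works with \<open>X = x\<close> and yields \<open>\<partial>\<^sub>t + \<epsilon> u \<partial>\<^sub>u\<close>;
  the case \<open>\<tau> = 0 \<noteq> \<xi>\<close> is its mirror image and produces the second kind of change of variables.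
  If both vanish, \<open>Q = (k u + r) \<partial>\<^sub>u\<close>, which the shift \<open>u + r / k\<close> turns into \<open>k u \<partial>\<^sub>u\<close>
  when \<open>k \<noteq> 0\<close>.
\<close>

lemma smooth2_onE:
  assumes "smooth2_on S f"
  obtains fa fb where "\<forall>p\<in>S. (f has_derivative (\<lambda>h. fa p * fst h + fb p * snd h)) (at p)"
    "smooth2_on S fa" "smooth2_on S fb"
  using assms by (cases rule: smooth2_on.cases) blast

lemma smooth2_on_subset: "smooth2_on S f \<Longrightarrow> T \<subseteq> S \<Longrightarrow> smooth2_on T f"
proof (coinduction arbitrary: f rule: smooth2_on.coinduct)
  case (smooth2_on f)
  obtain fa fb where "\<forall>p\<in>S. (f has_derivative (\<lambda>h. fa p * fst h + fb p * snd h)) (at p)"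
    "smooth2_on S fa" "smooth2_on S fb"
    using smooth2_on(1) by (rule smooth2_onE)
  with smooth2_on(2) show ?case
    by (intro exI[of _ f] exI[of _ fa] exI[of _ fb]) blast
qed

lemma smooth2_on_cong:
  assumes "smooth2_on S f" "open S" "\<And>p. p \<in> S \<Longrightarrow> f p = g p"
  shows "smooth2_on S g"
proof -
  obtain fa fb where f': "\<forall>p\<in>S. (f has_derivative (\<lambda>h. fa p * fst h + fb p * snd h)) (at p)"
    and fa: "smooth2_on S fa" and fb: "smooth2_on S fb"
    using assms(1) by (rule smooth2_onE)
  have "\<forall>p\<in>S. (g has_derivative (\<lambda>h. fa p * fst h + fb p * snd h)) (at p)"
    using has_derivative_transform_within_open[OF f'[rule_format] assms(2)] assms(3) by blast
  then show ?thesis by (rule smooth2_on.intros[OF _ fa fb])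
qed

lemma smooth2_on_const: "smooth2_on S (\<lambda>_. c)"
proof (coinduction arbitrary: c rule: smooth2_on.coinduct)
  case smooth2_on
  have "\<forall>p\<in>S. ((\<lambda>_. c) has_derivative (\<lambda>h. 0 * fst h + 0 * snd h)) (at p)"
    by simp
  then show ?case by (intro exI[of _ "\<lambda>_. c"] exI[of _ "\<lambda>_. 0"]) blast
qed

lemma smooth2_on_fst: "smooth2_on S fst"
proof (rule smooth2_on.intros[where fa="\<lambda>_. 1" and fb="\<lambda>_. 0"])
  show "\<forall>p\<in>S. (fst has_derivative (\<lambda>h. 1 * fst h + 0 * snd h)) (at p)"
    by (simp add: bounded_linear_fst bounded_linear_imp_has_derivative)
qed (rule smooth2_on_const)+

lemma smooth2_on_snd: "smooth2_on S snd"
proof (rule smooth2_on.intros[where fa="\<lambda>_. 0" and fb="\<lambda>_. 1"])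
  show "\<forall>p\<in>S. (snd has_derivative (\<lambda>h. 0 * fst h + 1 * snd h)) (at p)"
    by (simp add: bounded_linear_snd bounded_linear_imp_has_derivative)
qed (rule smooth2_on_const)+

text \<open>The partial derivatives of a sum, product, composite, reciprocal or exponential are built
  by the same operations, so the class they generate is a coinduction invariant for
  \<^const>\<open>smooth2_on\<close>.\<close>
inductive smooth2_closure :: "(real \<times> real) set \<Rightarrow> (real \<times> real \<Rightarrow> real) \<Rightarrow> bool" for S where
  base: "smooth2_on S f \<Longrightarrow> smooth2_closure S f"
| add: "smooth2_closure S f \<Longrightarrow> smooth2_closure S g \<Longrightarrow> smooth2_closure S (\<lambda>p. f p + g p)"
| mult: "smooth2_closure S f \<Longrightarrow> smooth2_closure S g \<Longrightarrow> smooth2_closure S (\<lambda>p. f p * g p)"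
| compose: "smooth2_on U h \<Longrightarrow> smooth2_closure S g1 \<Longrightarrow> smooth2_closure S g2 \<Longrightarrow>
    (\<forall>p\<in>S. (g1 p, g2 p) \<in> U) \<Longrightarrow> smooth2_closure S (\<lambda>p. h (g1 p, g2 p))"
| inverse: "smooth2_closure S g \<Longrightarrow> (\<forall>p\<in>S. g p \<noteq> 0) \<Longrightarrow> smooth2_closure S (\<lambda>p. 1 / g p)"
| exp: "smooth2_closure S g \<Longrightarrow> smooth2_closure S (\<lambda>p. exp (g p))"

lemma smooth2_closure_has_derivative:
  assumes "smooth2_closure S f"
  shows "\<exists>fa fb. smooth2_closure S fa \<and> smooth2_closure S fb \<and>
     (\<forall>p\<in>S. (f has_derivative (\<lambda>h. fa p * fst h + fb p * snd h)) (at p))"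
  using assms
proof induction
  case (base f)
  then obtain fa fb where "\<forall>p\<in>S. (f has_derivative (\<lambda>h. fa p * fst h + fb p * snd h)) (at p)"
    "smooth2_on S fa" "smooth2_on S fb"
    by (rule smooth2_onE)
  then show ?case by (intro exI[of _ fa] exI[of _ fb] conjI smooth2_closure.base)
next
  case (add f g)
  then obtain fa fb ga gb where f': "smooth2_closure S fa" "smooth2_closure S fb"
      "\<forall>p\<in>S. (f has_derivative (\<lambda>h. fa p * fst h + fb p * snd h)) (at p)"
    and g': "smooth2_closure S ga" "smooth2_closure S gb"
      "\<forall>p\<in>S. (g has_derivative (\<lambda>h. ga p * fst h + gb p * snd h)) (at p)"
    by blast
  have "((\<lambda>p. f p + g p) has_derivative
      (\<lambda>h. (fa p + ga p) * fst h + (fb p + gb p) * snd h)) (at p)" if "p \<in> S" for p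
    using has_derivative_add[OF f'(3)[rule_format, OF that] g'(3)[rule_format, OF that]]
    by (simp add: algebra_simps)
  then show ?case
    by (intro exI[of _ "\<lambda>p. fa p + ga p"] exI[of _ "\<lambda>p. fb p + gb p"] conjI ballI
        smooth2_closure.add f'(1,2) g'(1,2))
next
  case (mult f g)
  then obtain fa fb ga gb where f': "smooth2_closure S fa" "smooth2_closure S fb"
      "\<forall>p\<in>S. (f has_derivative (\<lambda>h. fa p * fst h + fb p * snd h)) (at p)"
    and g': "smooth2_closure S ga" "smooth2_closure S gb"
      "\<forall>p\<in>S. (g has_derivative (\<lambda>h. ga p * fst h + gb p * snd h)) (at p)"
    by blast
  have "((\<lambda>p. f p * g p) has_derivative
      (\<lambda>h. (f p * ga p + fa p * g p) * fst h + (f p * gb p + fb p * g p) * snd h)) (at p)"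
    if "p \<in> S" for p
    using has_derivative_mult[OF f'(3)[rule_format, OF that] g'(3)[rule_format, OF that]]
    by (simp add: algebra_simps)
  then show ?case
    by (intro exI[of _ "\<lambda>p. f p * ga p + fa p * g p"] exI[of _ "\<lambda>p. f p * gb p + fb p * g p"]
        conjI ballI smooth2_closure.add smooth2_closure.mult mult.hyps f'(1,2) g'(1,2))
next
  case (compose U h g1 g2)
  then obtain g1a g1b g2a g2b where g1': "smooth2_closure S g1a" "smooth2_closure S g1b"
      "\<forall>p\<in>S. (g1 has_derivative (\<lambda>h. g1a p * fst h + g1b p * snd h)) (at p)"
    and g2': "smooth2_closure S g2a" "smooth2_closure S g2b"
      "\<forall>p\<in>S. (g2 has_derivative (\<lambda>h. g2a p * fst h + g2b p * snd h)) (at p)"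
    by blast
  obtain ha hb where h': "\<forall>q\<in>U. (h has_derivative (\<lambda>k. ha q * fst k + hb q * snd k)) (at q)"
    and ha: "smooth2_on U ha" and hb: "smooth2_on U hb"
    using compose.hyps(1) by (rule smooth2_onE)
  have "((\<lambda>p. h (g1 p, g2 p)) has_derivative
     (\<lambda>k. (ha (g1 p, g2 p) * g1a p + hb (g1 p, g2 p) * g2a p) * fst k
        + (ha (g1 p, g2 p) * g1b p + hb (g1 p, g2 p) * g2b p) * snd k)) (at p)" if "p \<in> S" for p
    using has_derivative_compose[OF has_derivative_Pair[OF g1'(3)[rule_format, OF that]
        g2'(3)[rule_format, OF that]] h'[rule_format, of "(g1 p, g2 p)"]] compose.hyps(4) that
    by (simp add: algebra_simps)
  moreover note smooth2_closure.compose[OF ha compose.hyps(2-4)]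
    smooth2_closure.compose[OF hb compose.hyps(2-4)]
  ultimately show ?case
    by (intro exI[of _ "\<lambda>p. ha (g1 p, g2 p) * g1a p + hb (g1 p, g2 p) * g2a p"]
        exI[of _ "\<lambda>p. ha (g1 p, g2 p) * g1b p + hb (g1 p, g2 p) * g2b p"]
        conjI ballI smooth2_closure.add smooth2_closure.mult g1'(1,2) g2'(1,2)) assumption+
next
  case (inverse g)
  then obtain ga gb where g': "smooth2_closure S ga" "smooth2_closure S gb"
    "\<forall>p\<in>S. (g has_derivative (\<lambda>h. ga p * fst h + gb p * snd h)) (at p)"
    by blast
  have "((\<lambda>p. 1 / g p) has_derivative
     (\<lambda>k. (- 1 * ga p * (1 / g p) * (1 / g p)) * fst k + (- 1 * gb p * (1 / g p) * (1 / g p)) * snd k))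
     (at p)" if "p \<in> S" for p
    using has_derivative_divide[OF has_derivative_const[of 1] g'(3)[rule_format, OF that]] inverse.hyps(2) that
    by (simp add: field_simps power2_eq_square)
  moreover note smooth2_closure.inverse[OF inverse.hyps] smooth2_closure.base[OF smooth2_on_const]
  ultimately show ?case
    by (intro exI[of _ "\<lambda>p. - 1 * ga p * (1 / g p) * (1 / g p)"]
        exI[of _ "\<lambda>p. - 1 * gb p * (1 / g p) * (1 / g p)"] conjI ballI smooth2_closure.mult g'(1,2))
      assumption+
next
  case (exp g)
  then obtain ga gb where g': "smooth2_closure S ga" "smooth2_closure S gb"
    "\<forall>p\<in>S. (g has_derivative (\<lambda>h. ga p * fst h + gb p * snd h)) (at p)"
    by blast
  have "((\<lambda>p. exp (g p)) has_derivative
     (\<lambda>k. (exp (g p) * ga p) * fst k + (exp (g p) * gb p) * snd k)) (at p)" if "p \<in> S" for p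
    using has_derivative_exp[OF g'(3)[rule_format, OF that]] by (simp add: algebra_simps)
  then show ?case
    by (intro exI[of _ "\<lambda>p. exp (g p) * ga p"] exI[of _ "\<lambda>p. exp (g p) * gb p"]
        conjI ballI smooth2_closure.mult smooth2_closure.exp exp.hyps g'(1,2))
qed

lemma smooth2_closure_imp_smooth2_on: "smooth2_closure S f \<Longrightarrow> smooth2_on S f"
proof (coinduction arbitrary: f rule: smooth2_on.coinduct)
  case (smooth2_on f)
  then obtain fa fb where "smooth2_closure S fa" "smooth2_closure S fb"
    "\<forall>p\<in>S. (f has_derivative (\<lambda>h. fa p * fst h + fb p * snd h)) (at p)"
    using smooth2_closure_has_derivative by blast
  then show ?case by (intro exI[of _ f] exI[of _ fa] exI[of _ fb]) blast
qed

lemma smooth2_on_add: "smooth2_on S f \<Longrightarrow> smooth2_on S g \<Longrightarrow> smooth2_on S (\<lambda>p. f p + g p)"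
  by (rule smooth2_closure_imp_smooth2_on, rule smooth2_closure.add; rule smooth2_closure.base)

lemma smooth2_on_mult: "smooth2_on S f \<Longrightarrow> smooth2_on S g \<Longrightarrow> smooth2_on S (\<lambda>p. f p * g p)"
  by (rule smooth2_closure_imp_smooth2_on, rule smooth2_closure.mult; rule smooth2_closure.base)

lemma smooth2_on_compose:
  "smooth2_on U h \<Longrightarrow> smooth2_on S g1 \<Longrightarrow> smooth2_on S g2 \<Longrightarrow> \<forall>p\<in>S. (g1 p, g2 p) \<in> U \<Longrightarrow>
    smooth2_on S (\<lambda>p. h (g1 p, g2 p))"
  by (rule smooth2_closure_imp_smooth2_on, rule smooth2_closure.compose; (rule smooth2_closure.base)?)

lemma smooth2_on_inverse: "smooth2_on S g \<Longrightarrow> \<forall>p\<in>S. g p \<noteq> 0 \<Longrightarrow> smooth2_on S (\<lambda>p. 1 / g p)"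
  by (rule smooth2_closure_imp_smooth2_on, rule smooth2_closure.inverse; (rule smooth2_closure.base)?)

lemma smooth2_on_exp: "smooth2_on S g \<Longrightarrow> smooth2_on S (\<lambda>p. exp (g p))"
  by (rule smooth2_closure_imp_smooth2_on, rule smooth2_closure.exp; rule smooth2_closure.base)

lemma smooth2_on_cmult: "smooth2_on S f \<Longrightarrow> smooth2_on S (\<lambda>p. c * f p)"
  by (rule smooth2_on_mult[OF smooth2_on_const])

lemma smooth2_on_diff: "smooth2_on S f \<Longrightarrow> smooth2_on S g \<Longrightarrow> smooth2_on S (\<lambda>p. f p - g p)"
  using smooth2_on_add[OF _ smooth2_on_cmult[of S g "- 1"]] by simp

lemma smooth2_on_divide:
  "smooth2_on S f \<Longrightarrow> smooth2_on S g \<Longrightarrow> \<forall>p\<in>S. g p \<noteq> 0 \<Longrightarrow> smooth2_on S (\<lambda>p. f p / g p)"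
  using smooth2_on_mult[OF _ smooth2_on_inverse[of S g]] by simp

lemma smooth2_on_continuous_on: "smooth2_on S f \<Longrightarrow> continuous_on S f"
  by (erule smooth2_onE) (meson continuous_at_imp_continuous_on has_derivative_continuous)

lemma smooth1_onE:
  assumes "smooth1_on S f"
  obtains f' where "\<forall>t\<in>S. (f has_real_derivative f' t) (at t)" "smooth1_on S f'"
  using assms by (cases rule: smooth1_on.cases) blast

lemma smooth1_on_subset: "smooth1_on S f \<Longrightarrow> T \<subseteq> S \<Longrightarrow> smooth1_on T f"
proof (coinduction arbitrary: f rule: smooth1_on.coinduct)
  case (smooth1_on f)
  obtain f' where "\<forall>t\<in>S. (f has_real_derivative f' t) (at t)" "smooth1_on S f'"
    using smooth1_on(1) by (rule smooth1_onE)
  with smooth1_on(2) show ?case by (intro exI[of _ f] exI[of _ f']) blast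
qed

lemma smooth1_on_const: "smooth1_on S (\<lambda>_. c)"
proof (coinduction arbitrary: c rule: smooth1_on.coinduct)
  case smooth1_on
  show ?case by (intro exI[of _ "\<lambda>_. c"] exI[of _ "\<lambda>_. 0"]) auto
qed

lemma smooth1_on_continuous_on: "smooth1_on S f \<Longrightarrow> continuous_on S f"
  by (erule smooth1_onE) (meson continuous_at_imp_continuous_on DERIV_isCont)

lemma has_derivative_compose_fst:
  "(f has_real_derivative D) (at (fst p)) \<Longrightarrow>
    ((\<lambda>q. f (fst q)) has_derivative (\<lambda>h. D * fst h + 0 * snd h)) (at p)"
  unfolding has_field_derivative_def
  by (rule has_derivative_eq_rhs[OF has_derivative_compose[OF has_derivative_fst[OF has_derivative_ident]]])
    auto

lemma has_derivative_compose_snd: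
  "(f has_real_derivative D) (at (snd p)) \<Longrightarrow>
    ((\<lambda>q. f (snd q)) has_derivative (\<lambda>h. 0 * fst h + D * snd h)) (at p)"
  unfolding has_field_derivative_def
  by (rule has_derivative_eq_rhs[OF has_derivative_compose[OF has_derivative_snd[OF has_derivative_ident]]])
    auto

lemma smooth2_on_compose_fst:
  assumes "smooth1_on I f" "fst ` S \<subseteq> I"
  shows "smooth2_on S (\<lambda>p. f (fst p))"
  using assms(1)
proof (coinduction arbitrary: f rule: smooth2_on.coinduct)
  case (smooth2_on f)
  obtain f' where f': "\<forall>t\<in>I. (f has_real_derivative f' t) (at t)" "smooth1_on I f'"
    using smooth2_on by (rule smooth1_onE)
  have "\<forall>p\<in>S. ((\<lambda>p. f (fst p)) has_derivative (\<lambda>h. f' (fst p) * fst h + 0 * snd h)) (at p)"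
    using f'(1) assms(2) by (blast intro: has_derivative_compose_fst)
  with f'(2) smooth2_on_const show ?case
    by (intro exI[of _ "\<lambda>p. f (fst p)"] exI[of _ "\<lambda>p. f' (fst p)"] exI[of _ "\<lambda>_. 0"]) blast
qed

lemma smooth2_on_compose_snd:
  assumes "smooth1_on I f" "snd ` S \<subseteq> I"
  shows "smooth2_on S (\<lambda>p. f (snd p))"
  using assms(1)
proof (coinduction arbitrary: f rule: smooth2_on.coinduct)
  case (smooth2_on f)
  obtain f' where f': "\<forall>t\<in>I. (f has_real_derivative f' t) (at t)" "smooth1_on I f'"
    using smooth2_on by (rule smooth1_onE)
  have "\<forall>p\<in>S. ((\<lambda>p. f (snd p)) has_derivative (\<lambda>h. 0 * fst h + f' (snd p) * snd h)) (at p)"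
    using f'(1) assms(2) by (blast intro: has_derivative_compose_snd)
  with f'(2) smooth2_on_const show ?case
    by (intro exI[of _ "\<lambda>p. f (snd p)"] exI[of _ "\<lambda>_. 0"] exI[of _ "\<lambda>p. f' (snd p)"]) blast
qed

lemma smooth1_on_if_smooth2_on_compose_fst:
  assumes "open I" "smooth2_on (I \<times> UNIV) (\<lambda>p. f (fst p))"
  shows "smooth1_on I f"
  using assms(2)
proof (coinduction arbitrary: f rule: smooth1_on.coinduct)
  case (smooth1_on f)
  then obtain fa fb where
    f': "\<forall>p\<in>I \<times> UNIV. ((\<lambda>p. f (fst p)) has_derivative (\<lambda>h. fa p * fst h + fb p * snd h)) (at p)"
    and fa: "smooth2_on (I \<times> UNIV) fa"
    by (rule smooth2_onE)
  have line: "(f has_real_derivative fa (t, y)) (at t)" if "t \<in> I" for t y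
  proof -
    have "((\<lambda>s. (s, y)) has_derivative (\<lambda>h. (h, 0))) (at t)"
      by (rule has_derivative_eq_rhs[OF has_derivative_Pair[OF has_derivative_ident has_derivative_const]])
        simp
    from has_derivative_compose[OF this f'[rule_format, of "(t, y)"]] that
    show ?thesis by (simp add: has_field_derivative_def mult_commute_abs)
  qed
  have "fa p = fa (fst p, 0)" if "p \<in> I \<times> UNIV" for p
    using line[of "fst p" "snd p"] line[of "fst p" 0] that DERIV_unique by (cases p) auto
  then have "smooth2_on (I \<times> UNIV) (\<lambda>p. fa (fst p, 0))"
    by (intro smooth2_on_cong[OF fa] open_Times assms(1)) auto
  with line show ?case by (intro exI[of _ f] exI[of _ "\<lambda>t. fa (t, 0)"]) auto
qed

lemma smooth1_on_mult:
  "open I \<Longrightarrow> smooth1_on I f \<Longrightarrow> smooth1_on I g \<Longrightarrow> smooth1_on I (\<lambda>t. f t * g t)"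
  by (rule smooth1_on_if_smooth2_on_compose_fst, assumption, rule smooth2_on_mult;
      rule smooth2_on_compose_fst) auto

lemma smooth1_on_inverse:
  "open I \<Longrightarrow> smooth1_on I f \<Longrightarrow> \<forall>t\<in>I. f t \<noteq> 0 \<Longrightarrow> smooth1_on I (\<lambda>t. 1 / f t)"
  by (rule smooth1_on_if_smooth2_on_compose_fst, assumption, rule smooth2_on_inverse,
      rule smooth2_on_compose_fst) auto

lemma smooth1_on_ident: "open I \<Longrightarrow> smooth1_on I (\<lambda>t. t)"
  by (rule smooth1_on_if_smooth2_on_compose_fst) (simp_all add: smooth2_on_fst)

lemma inj_on_if_derivative_nonzero:
  fixes f :: "real \<Rightarrow> real"
  assumes "convex S" "\<forall>x\<in>S. (f has_real_derivative f' x) (at x) \<and> f' x \<noteq> 0"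
  shows "inj_on f S"
proof (rule inj_onI, rule ccontr)
  fix x y assume xy: "x \<in> S" "y \<in> S" "f x = f y" "x \<noteq> y"
  define a b where "a = min x y" and "b = max x y"
  have ab: "a < b" "a \<in> S" "b \<in> S" "f a = f b"
    using xy by (auto simp: a_def b_def min_def max_def)
  have "is_interval S" using assms(1) by (simp add: is_interval_convex_1)
  then have sub: "z \<in> S" if "a \<le> z" "z \<le> b" for z
    using ab(2,3) that unfolding is_interval_1 by blast
  then have "(f has_real_derivative f' z) (at z)" if "a \<le> z" "z \<le> b" for z
    using assms(2) that by blast
  from MVT2[OF ab(1) this] obtain z where "a < z" "z < b" "f b - f a = (b - a) * f' z"
    by blast
  with ab have "f' z = 0" "z \<in> S" using sub by auto
  with assms(2) show False by blast
qed

lemma smooth1_on_the_inv_into: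
  assumes J: "open J" and B: "smooth1_on J B" and inj: "inj_on B J" and B': "\<forall>x\<in>J. deriv B x \<noteq> 0"
  shows "smooth1_on (B ` J) (the_inv_into J B)"
proof -
  define g where "g = the_inv_into J B"
  obtain b where b: "\<forall>x\<in>J. (B has_real_derivative b x) (at x)" and "smooth1_on J b"
    using B by (rule smooth1_onE)
  have b0: "\<forall>x\<in>J. b x \<noteq> 0" using B' b by (metis DERIV_imp_deriv)
  have gB: "g (B x) = x" if "x \<in> J" for x
    using inj that by (simp add: g_def the_inv_into_f_f)
  have g': "(g has_real_derivative 1 / b x) (at (B x))" if x: "x \<in> J" for x
    unfolding has_field_derivative_def
  proof (rule has_derivative_inverse_strong[OF J x smooth1_on_continuous_on[OF B] gB])
    show "(B has_derivative (*) (b x)) (at x)" using b x by (simp add: has_field_derivative_def)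
    show "(*) (b x) \<circ> (*) (1 / b x) = id" using b0 x by (auto simp: fun_eq_iff)
  qed
  have "smooth1_on J (\<lambda>x. 1 / b x)"
    using smooth1_on_inverse[OF J \<open>smooth1_on J b\<close> b0] .
  show ?thesis
    unfolding g_def[symmetric]
  proof (rule smooth1_on.coinduct[where X="\<lambda>G. \<exists>h. smooth1_on J h \<and> G = (\<lambda>y. h (g y))"])
    show "\<exists>h. smooth1_on J h \<and> g = (\<lambda>y. h (g y))"
      using smooth1_on_ident[OF J] by blast
  next
    fix G assume "\<exists>h. smooth1_on J h \<and> G = (\<lambda>y. h (g y))"
    then obtain h where h: "smooth1_on J h" and G: "G = (\<lambda>y. h (g y))" by blast
    obtain h' where h': "\<forall>x\<in>J. (h has_real_derivative h' x) (at x)" "smooth1_on J h'"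
      using h by (rule smooth1_onE)
    have "(G has_real_derivative h' (g y) * (1 / b (g y))) (at y)" if "y \<in> B ` J" for y
    proof -
      obtain x where x: "x \<in> J" "y = B x" using \<open>y \<in> B ` J\<close> by blast
      have "(h has_real_derivative h' x) (at (g (B x)))" using h'(1) x gB by simp
      from DERIV_chain2[OF this g'[OF x(1)]] show ?thesis using x gB by (simp add: G)
    qed
    moreover have "smooth1_on J (\<lambda>x. h' x * (1 / b x))"
      by (rule smooth1_on_mult[OF J h'(2)]) fact
    ultimately show "\<exists>f f'. G = f \<and> (\<forall>t\<in>B ` J. (f has_real_derivative f' t) (at t)) \<and>
        ((\<exists>h. smooth1_on J h \<and> f' = (\<lambda>y. h (g y))) \<or> smooth1_on (B ` J) f')"
      by (intro exI[of _ G] exI[of _ "\<lambda>y. h' (g y) * (1 / b (g y))"] conjI ballI disjI1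
          exI[of _ "\<lambda>x. h' x * (1 / b x)"]) auto
  qed
qed

lemma smooth1_on_inverse_on_interval:
  fixes B :: "real \<Rightarrow> real"
  assumes B': "\<forall>x\<in>{\<gamma><..<\<delta>}. (B has_real_derivative B' x) (at x) \<and> B' x \<noteq> 0"
    and B: "smooth1_on {\<gamma><..<\<delta>} B"
  shows "open (B ` {\<gamma><..<\<delta>})" "smooth1_on (B ` {\<gamma><..<\<delta>}) (the_inv_into {\<gamma><..<\<delta>} B)"
    "\<And>x. x \<in> {\<gamma><..<\<delta>} \<Longrightarrow> the_inv_into {\<gamma><..<\<delta>} B (B x) = x"
proof -
  have inj: "inj_on B {\<gamma><..<\<delta>}"
    using B' by (intro inj_on_if_derivative_nonzero[where f'=B']) auto
  show "open (B ` {\<gamma><..<\<delta>})"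
    by (rule injective_into_1d_imp_open_map_UNIV[OF _ smooth1_on_continuous_on[OF B] inj]) auto
  show "smooth1_on (B ` {\<gamma><..<\<delta>}) (the_inv_into {\<gamma><..<\<delta>} B)"
    using B' DERIV_imp_deriv by (intro smooth1_on_the_inv_into B inj) fastforce+
  show "\<And>x. x \<in> {\<gamma><..<\<delta>} \<Longrightarrow> the_inv_into {\<gamma><..<\<delta>} B (B x) = x"
    using inj by (simp add: the_inv_into_f_f)
qed

lemma smooth_antiderivative_of_reciprocal:
  fixes \<tau> :: "real \<Rightarrow> real"
  assumes \<tau>: "smooth1_on UNIV \<tau>" and \<tau>0: "\<tau> t0 \<noteq> 0"
  obtains \<alpha> \<beta> A where "\<alpha> < t0" "t0 < \<beta>"
    "\<forall>t\<in>{\<alpha><..<\<beta>}. \<tau> t \<noteq> 0 \<and> (A has_real_derivative 1 / \<tau> t) (at t)" "smooth1_on {\<alpha><..<\<beta>} A"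
proof -
  have cont: "continuous_on UNIV \<tau>" by (rule smooth1_on_continuous_on[OF \<tau>])
  then have "isCont \<tau> t0" by (simp add: continuous_on_eq_continuous_at)
  then obtain d where "d > 0" and d: "\<forall>t. dist t0 t < d \<longrightarrow> \<tau> t \<noteq> 0"
    using continuous_at_avoid[of t0 \<tau> 0] \<tau>0 by blast
  define \<alpha> \<beta> where "\<alpha> = t0 - d / 2" and "\<beta> = t0 + d / 2"
  have nz: "\<tau> s \<noteq> 0" if "\<alpha> \<le> s" "s \<le> \<beta>" for s
    using d that \<open>d > 0\<close> by (auto simp: \<alpha>_def \<beta>_def dist_real_def)
  define A where "A = (\<lambda>t. integral {\<alpha>..t} (\<lambda>s. 1 / \<tau> s))"
  have "continuous_on {\<alpha>..\<beta>} (\<lambda>s. 1 / \<tau> s)"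
    using nz by (intro continuous_on_divide continuous_on_const continuous_on_subset[OF cont]) auto
  then have A': "(A has_real_derivative 1 / \<tau> t) (at t)" if "t \<in> {\<alpha><..<\<beta>}" for t
    using integral_has_real_derivative[of \<alpha> \<beta> "\<lambda>s. 1 / \<tau> s" t] at_within_interior[of t "{\<alpha>..\<beta>}"] that
    by (simp add: A_def)
  have "smooth1_on {\<alpha><..<\<beta>} (\<lambda>t. 1 / \<tau> t)"
    using nz by (intro smooth1_on_inverse smooth1_on_subset[OF \<tau>]) auto
  with A' have "smooth1_on {\<alpha><..<\<beta>} A"
    by (auto intro: smooth1_on.intros[of _ A "\<lambda>t. 1 / \<tau> t"])
  with A' nz \<open>d > 0\<close> show ?thesis by (intro that[of \<alpha> \<beta> A]) (auto simp: \<alpha>_def \<beta>_def)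
qed

lemma open_contains_square:
  fixes S :: "(real \<times> real) set"
  assumes "open S" "(t, x) \<in> S"
  obtains e where "e > 0" "{t - e<..<t + e} \<times> {x - e<..<x + e} \<subseteq> S"
proof -
  obtain r where "r > 0" and r: "ball (t, x) r \<subseteq> S" using assms open_contains_ball by blast
  have "(s, y) \<in> ball (t, x) r" if "s \<in> {t - r/2<..<t + r/2}" "y \<in> {x - r/2<..<x + r/2}" for s y
  proof -
    have "dist (t, x) (s, y) \<le> dist t s + dist x y"
      unfolding dist_Pair_Pair by (rule sqrt_sum_squares_le_sum[OF zero_le_dist zero_le_dist])
    then show ?thesis using that by (auto simp: dist_real_def)
  qed
  with r \<open>r > 0\<close> show ?thesis by (intro that[of "r / 2"]) auto
qed

lemma has_field_derivative_integral_parameter: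
  fixes f fb :: "real \<times> real \<Rightarrow> real"
  assumes J: "convex J" "x \<in> J" and S: "{a..t} \<times> J \<subseteq> S"
    and f': "\<forall>p\<in>S. (f has_derivative (\<lambda>h. fa p * fst h + fb p * snd h)) (at p)"
    and cont: "continuous_on S f" "continuous_on S fb"
  shows "((\<lambda>y. integral {a..t} (\<lambda>s. f (s, y))) has_real_derivative integral {a..t} (\<lambda>s. fb (s, x)))
    (at x within J)"
proof -
  have "((\<lambda>y. integral (cbox a t) (\<lambda>s. f (s, y))) has_real_derivative integral (cbox a t) (\<lambda>s. fb (s, x)))
    (at x within J)"
  proof (rule leibniz_rule_field_derivative[where fx="\<lambda>y s. fb (s, y)"])
    fix y s assume "y \<in> J" "s \<in> cbox a t"
    then have p: "(s, y) \<in> S" using S by auto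
    have "((\<lambda>y. (s, y)) has_derivative (\<lambda>h. (0, h))) (at y)"
      by (rule has_derivative_eq_rhs[OF has_derivative_Pair[OF has_derivative_const has_derivative_ident]])
        simp
    from has_derivative_compose[OF this f'[rule_format, OF p]]
    show "((\<lambda>y. f (s, y)) has_real_derivative fb (s, y)) (at y within J)"
      by (simp add: has_field_derivative_def has_derivative_at_withinI mult_commute_abs)
  next
    fix y assume "y \<in> J"
    have "continuous_on (cbox a t) (\<lambda>s. f (s, y))"
      by (rule continuous_on_compose2[OF cont(1)]) (use S \<open>y \<in> J\<close> in \<open>auto intro!: continuous_intros\<close>)
    then show "(\<lambda>s. f (s, y)) integrable_on cbox a t"
      by (rule integrable_continuous)
  next
    have "continuous_on (J \<times> cbox a t) (\<lambda>p. fb (snd p, fst p))"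
      by (rule continuous_on_compose2[OF cont(2)]) (use S in \<open>auto intro!: continuous_intros\<close>)
    then show "continuous_on (J \<times> cbox a t) (\<lambda>(y, s). fb (s, y))"
      by (simp add: case_prod_beta')
  qed (use J in auto)
  then show ?thesis by simp
qed

lemma has_derivative_swap:
  assumes "(f has_derivative (\<lambda>h. a * fst h + b * snd h)) (at (x, t))"
  shows "((\<lambda>p. f (snd p, fst p)) has_derivative (\<lambda>h. b * fst h + a * snd h)) (at (t, x))"
proof -
  have "((\<lambda>p. (snd p, fst p)) has_derivative (\<lambda>h. (snd h, fst h))) (at (t, x))"
    by (intro has_derivative_Pair has_derivative_fst has_derivative_snd has_derivative_ident)
  moreover have "(f has_derivative (\<lambda>h. a * fst h + b * snd h)) (at ((\<lambda>p. (snd p, fst p)) (t, x)))"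
    using assms by simp
  ultimately show ?thesis
    by (rule has_derivative_eq_rhs[OF has_derivative_compose]) (simp add: fun_eq_iff algebra_simps)
qed

lemma has_derivative_parametric_integral:
  fixes f fb :: "real \<times> real \<Rightarrow> real"
  assumes J: "open J" "convex J" and a: "\<alpha> < a"
    and f': "\<forall>p\<in>{\<alpha><..<\<beta>} \<times> J. (f has_derivative (\<lambda>h. fa p * fst h + fb p * snd h)) (at p)"
    and cont: "continuous_on ({\<alpha><..<\<beta>} \<times> J) f" "continuous_on ({\<alpha><..<\<beta>} \<times> J) fb"
    and t: "a < t" "t < \<beta>" and x: "x \<in> J"
  shows "((\<lambda>p. integral {a..fst p} (\<lambda>s. f (s, snd p))) has_derivative
           (\<lambda>h. f (t, x) * fst h + integral {a..t} (\<lambda>s. fb (s, x)) * snd h)) (at (t, x))"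
proof -
  define T where "T = {a<..<\<beta>}"
  define F where "F y u = integral {a..u} (\<lambda>s. f (s, y))" for y u
  have sub: "{a..u} \<subseteq> {\<alpha><..<\<beta>}" if "u < \<beta>" for u using a that by auto
  have Fy: "((\<lambda>y. F y t) has_derivative (\<lambda>h. integral {a..t} (\<lambda>s. fb (s, x)) * h)) (at x within J)"
    using has_field_derivative_integral_parameter[OF J(2) x _ f' cont] sub[OF t(2)]
    by (auto simp: F_def has_field_derivative_def)
  have Fu: "((\<lambda>u. F y u) has_derivative blinfun_apply (blinfun_mult_right (f (u, y)))) (at u within T)"
    if "y \<in> J" "u \<in> T" for y u
  proof -
    define b where "b = (u + \<beta>) / 2"
    have ub: "a < u" "u < b" "b < \<beta>" using that by (auto simp: T_def b_def)
    have "continuous_on {a..b} (\<lambda>s. f (s, y))"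
      by (rule continuous_on_compose2[OF cont(1)]) (use sub[OF ub(3)] that in \<open>auto intro!: continuous_intros\<close>)
    then have "((\<lambda>u. F y u) has_real_derivative f (u, y)) (at u within {a..b})"
      unfolding F_def by (rule integral_has_real_derivative) (use ub in auto)
    moreover have "at u within {a..b} = at u"
      by (rule at_within_interior) (use ub in auto)
    ultimately have "((\<lambda>u. F y u) has_real_derivative f (u, y)) (at u within T)"
      by (simp add: has_field_derivative_at_within)
    then show ?thesis by (simp add: has_field_derivative_def mult_commute_abs)
  qed
  have "continuous_on (J \<times> T) (\<lambda>(y, u). blinfun_mult_right (f (u, y)))"
  proof -
    have "continuous_on (J \<times> T) (\<lambda>p. f (snd p, fst p))"
      by (rule continuous_on_compose2[OF cont(1)]) (use a in \<open>auto simp: T_def intro!: continuous_intros\<close>)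
    then show ?thesis by (auto simp: split_beta intro!: continuous_intros)
  qed
  moreover have xt: "(x, t) \<in> J \<times> T" using x t by (auto simp: T_def)
  ultimately have "continuous (at (x, t) within J \<times> T) (\<lambda>(y, u). blinfun_mult_right (f (u, y)))"
    by (simp add: continuous_on_eq_continuous_within)
  from has_derivative_partialsI[OF Fy Fu this] xt
  have "((\<lambda>(y, u). F y u) has_derivative (\<lambda>(hy, hu). integral {a..t} (\<lambda>s. fb (s, x)) * hy
      + blinfun_apply (blinfun_mult_right (f (t, x))) hu)) (at (x, t) within J \<times> T)"
    by (simp add: T_def)
  moreover have "at (x, t) within J \<times> T = at (x, t)"
    using xt J(1) by (intro at_within_open open_Times) (auto simp: T_def)
  ultimately have "((\<lambda>p. F (fst p) (snd p)) has_derivative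
      (\<lambda>h. integral {a..t} (\<lambda>s. fb (s, x)) * fst h + f (t, x) * snd h)) (at (x, t))"
    by (simp add: split_beta')
  from has_derivative_swap[OF this] show ?thesis by (simp add: F_def)
qed

lemma smooth2_on_parametric_integral:
  assumes J: "open J" "convex J" and a: "\<alpha> < a" and f: "smooth2_on ({\<alpha><..<\<beta>} \<times> J) f"
  shows "smooth2_on ({a<..<\<beta>} \<times> J) (\<lambda>p. integral {a..fst p} (\<lambda>s. f (s, snd p)))"
proof (rule smooth2_on.coinduct[where
      X="\<lambda>G. \<exists>f. smooth2_on ({\<alpha><..<\<beta>} \<times> J) f \<and> G = (\<lambda>p. integral {a..fst p} (\<lambda>s. f (s, snd p)))"])
  show "\<exists>f'. smooth2_on ({\<alpha><..<\<beta>} \<times> J) f' \<and>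
      (\<lambda>p. integral {a..fst p} (\<lambda>s. f (s, snd p))) = (\<lambda>p. integral {a..fst p} (\<lambda>s. f' (s, snd p)))"
    using f by blast
next
  fix G assume "\<exists>f. smooth2_on ({\<alpha><..<\<beta>} \<times> J) f \<and> G = (\<lambda>p. integral {a..fst p} (\<lambda>s. f (s, snd p)))"
  then obtain f where f: "smooth2_on ({\<alpha><..<\<beta>} \<times> J) f"
    and G: "G = (\<lambda>p. integral {a..fst p} (\<lambda>s. f (s, snd p)))"
    by blast
  obtain fa fb where f': "\<forall>p\<in>{\<alpha><..<\<beta>} \<times> J. (f has_derivative (\<lambda>h. fa p * fst h + fb p * snd h)) (at p)"
    and fb: "smooth2_on ({\<alpha><..<\<beta>} \<times> J) fb"
    using f by (rule smooth2_onE)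
  have G': "\<forall>p\<in>{a<..<\<beta>} \<times> J.
      (G has_derivative (\<lambda>h. f p * fst h + integral {a..fst p} (\<lambda>s. fb (s, snd p)) * snd h)) (at p)"
  proof
    fix p assume "p \<in> {a<..<\<beta>} \<times> J"
    with has_derivative_parametric_integral[OF J a f' smooth2_on_continuous_on[OF f]
        smooth2_on_continuous_on[OF fb], of "fst p" "snd p"]
    show "(G has_derivative (\<lambda>h. f p * fst h + integral {a..fst p} (\<lambda>s. fb (s, snd p)) * snd h)) (at p)"
      by (auto simp: G)
  qed
  have "smooth2_on ({a<..<\<beta>} \<times> J) f"
    using a by (intro smooth2_on_subset[OF f]) auto
  show "\<exists>Ga ga gb. G = Ga \<and>
      (\<forall>p\<in>{a<..<\<beta>} \<times> J. (Ga has_derivative (\<lambda>h. ga p * fst h + gb p * snd h)) (at p)) \<and>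
      ((\<exists>f. smooth2_on ({\<alpha><..<\<beta>} \<times> J) f \<and> ga = (\<lambda>p. integral {a..fst p} (\<lambda>s. f (s, snd p)))) \<or>
        smooth2_on ({a<..<\<beta>} \<times> J) ga) \<and>
      ((\<exists>f. smooth2_on ({\<alpha><..<\<beta>} \<times> J) f \<and> gb = (\<lambda>p. integral {a..fst p} (\<lambda>s. f (s, snd p)))) \<or>
        smooth2_on ({a<..<\<beta>} \<times> J) gb)"
    by (rule exI[of _ G], rule exI[of _ f], rule exI[of _ "\<lambda>p. integral {a..fst p} (\<lambda>s. fb (s, snd p))"])
      (use G' \<open>smooth2_on ({a<..<\<beta>} \<times> J) f\<close> fb in blast)
qed

text \<open>The integrating factor \<open>exp (k A)\<close> with \<open>A' = 1 / \<tau>\<close> solves \<open>\<tau> V\<^sub>t = k V - \<rho>\<close>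
  by variation of constants, with the transversal parameter \<open>p\<close> carried along.\<close>
lemma linear_ode_solution:
  fixes \<tau> A :: "real \<Rightarrow> real" and \<rho> :: "real \<times> real \<Rightarrow> real" and k :: real
  assumes P: "open P" "convex P" and a: "\<alpha> < a"
    and A: "\<forall>t\<in>{\<alpha><..<\<beta>}. \<tau> t \<noteq> 0 \<and> (A has_real_derivative 1 / \<tau> t) (at t)"
    and As: "smooth1_on {\<alpha><..<\<beta>} A" and \<tau>: "smooth1_on {\<alpha><..<\<beta>} \<tau>"
    and \<rho>: "smooth2_on ({\<alpha><..<\<beta>} \<times> P) \<rho>"
  defines "V \<equiv> \<lambda>q. - exp (k * A (fst q)) * integral {a..fst q} (\<lambda>s. exp (- k * A s) * \<rho> (s, snd q) / \<tau> s)"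
  shows "smooth2_on ({a<..<\<beta>} \<times> P) V"
    and "\<forall>q\<in>{a<..<\<beta>} \<times> P. \<exists>Vp.
      (V has_derivative (\<lambda>h. (k * V q - \<rho> q) / \<tau> (fst q) * fst h + Vp * snd h)) (at q)"
proof -
  define S where "S = {\<alpha><..<\<beta>} \<times> P"
  define \<phi> where "\<phi> q = exp (- k * A (fst q)) * \<rho> q / \<tau> (fst q)" for q
  define G where "G q = integral {a..fst q} (\<lambda>s. \<phi> (s, snd q))" for q
  have V: "V q = - exp (k * A (fst q)) * G q" for q
    by (simp add: V_def G_def \<phi>_def)
  have lift: "smooth2_on S (\<lambda>q. f (fst q))" if "smooth1_on {\<alpha><..<\<beta>} f" for f
    using that by (rule smooth2_on_compose_fst) (auto simp: S_def)
  have "smooth2_on S \<phi>"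
    unfolding \<phi>_def using A \<rho>
    by (intro smooth2_on_divide smooth2_on_mult smooth2_on_exp smooth2_on_cmult lift As \<tau>)
      (auto simp: S_def)
  then obtain \<phi>a \<phi>b where \<phi>': "\<forall>q\<in>S. (\<phi> has_derivative (\<lambda>h. \<phi>a q * fst h + \<phi>b q * snd h)) (at q)"
    and "smooth2_on S \<phi>b"
    by (rule smooth2_onE)
  have Gs: "smooth2_on ({a<..<\<beta>} \<times> P) G"
    unfolding G_def using smooth2_on_parametric_integral[OF P a] \<open>smooth2_on S \<phi>\<close> by (simp add: S_def)
  have liftA: "smooth2_on ({a<..<\<beta>} \<times> P) (\<lambda>q. A (fst q))"
    by (rule smooth2_on_compose_fst[OF As]) (use a in auto)
  show "smooth2_on ({a<..<\<beta>} \<times> P) V"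
    unfolding V using smooth2_on_mult[OF smooth2_on_cmult[OF smooth2_on_exp[OF smooth2_on_cmult[OF liftA]]] Gs,
        of "- 1" k]
    by simp
  show "\<forall>q\<in>{a<..<\<beta>} \<times> P. \<exists>Vp.
      (V has_derivative (\<lambda>h. (k * V q - \<rho> q) / \<tau> (fst q) * fst h + Vp * snd h)) (at q)"
  proof
    fix q assume q: "q \<in> {a<..<\<beta>} \<times> P"
    define t E where "t = fst q" and "E = exp (k * A t)"
    have t: "t \<in> {\<alpha><..<\<beta>}" "\<tau> t \<noteq> 0" using q a A by (auto simp: t_def)
    have "((\<lambda>s. - exp (k * A s)) has_real_derivative - (E * (k * (1 / \<tau> t)))) (at t)"
      unfolding E_def using A t(1) by (auto intro!: derivative_eq_intros)
    from has_derivative_compose_fst[OF this[unfolded t_def]]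
    have E': "((\<lambda>q. - exp (k * A (fst q))) has_derivative
        (\<lambda>h. - (E * (k / \<tau> t)) * fst h + 0 * snd h)) (at q)"
      by (simp add: t_def)
    have G': "(G has_derivative
        (\<lambda>h. \<phi> q * fst h + integral {a..t} (\<lambda>s. \<phi>b (s, snd q)) * snd h)) (at q)"
      using has_derivative_parametric_integral[OF P a \<phi>'[unfolded S_def] smooth2_on_continuous_on[OF \<open>smooth2_on S \<phi>\<close>[unfolded S_def]]
          smooth2_on_continuous_on[OF \<open>smooth2_on S \<phi>b\<close>[unfolded S_def]], of t "snd q"] q
      by (auto simp: G_def[abs_def] t_def)
    have "E * \<phi> q = \<rho> q / \<tau> t"
      by (simp add: E_def \<phi>_def t_def exp_minus field_simps)
    then have Vt: "- (E * (k / \<tau> t)) * G q - E * \<phi> q = (k * V q - \<rho> q) / \<tau> (fst q)"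
      using t(2) by (simp add: V E_def t_def field_simps)
    have Vfun: "V = (\<lambda>q. - exp (k * A (fst q)) * G q)" using V by (simp add: fun_eq_iff)
    have "(V has_derivative (\<lambda>h. (- (E * (k / \<tau> t)) * G q - E * \<phi> q) * fst h
        + (- E * integral {a..t} (\<lambda>s. \<phi>b (s, snd q))) * snd h)) (at q)"
      unfolding Vfun
      by (rule has_derivative_eq_rhs[OF has_derivative_mult[OF E' G']])
        (simp add: fun_eq_iff E_def t_def algebra_simps)
    then show "\<exists>Vp.
        (V has_derivative (\<lambda>h. (k * V q - \<rho> q) / \<tau> (fst q) * fst h + Vp * snd h)) (at q)"
      unfolding Vt by blast
  qed
qed

lemma linear_ode_local_solution:
  fixes \<tau> :: "real \<Rightarrow> real" and \<rho> :: "real \<times> real \<Rightarrow> real"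
  assumes \<tau>: "smooth1_on UNIV \<tau>" "\<tau> t0 \<noteq> 0" and U: "open U" "(t0, p0) \<in> U" and \<rho>: "smooth2_on U \<rho>"
  obtains I P V where "open I" "open P" "t0 \<in> I" "p0 \<in> P" "I \<times> P \<subseteq> U" "\<forall>t\<in>I. \<tau> t \<noteq> 0"
    "smooth2_on (I \<times> P) V"
    "\<forall>q\<in>I \<times> P. \<exists>Vp. (V has_derivative (\<lambda>h. (k * V q - \<rho> q) / \<tau> (fst q) * fst h + Vp * snd h)) (at q)"
proof -
  obtain \<alpha> \<beta> A where "\<alpha> < t0" "t0 < \<beta>"
    and A: "\<forall>t\<in>{\<alpha><..<\<beta>}. \<tau> t \<noteq> 0 \<and> (A has_real_derivative 1 / \<tau> t) (at t)"
    and As: "smooth1_on {\<alpha><..<\<beta>} A"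
    using smooth_antiderivative_of_reciprocal[OF \<tau>] by blast
  have "open (U \<inter> {\<alpha><..<\<beta>} \<times> UNIV)" using U(1) by (intro open_Int open_Times) auto
  moreover have "(t0, p0) \<in> U \<inter> {\<alpha><..<\<beta>} \<times> UNIV" using U(2) \<open>\<alpha> < t0\<close> \<open>t0 < \<beta>\<close> by auto
  ultimately
  obtain e where "e > 0" and e: "{t0 - e<..<t0 + e} \<times> {p0 - e<..<p0 + e} \<subseteq> U \<inter> {\<alpha><..<\<beta>} \<times> UNIV"
    by (rule open_contains_square)
  define P where "P = {p0 - e<..<p0 + e}"
  have p0: "p0 \<in> P" using \<open>e > 0\<close> by (simp add: P_def)
  have sub: "{t0 - e<..<t0 + e} \<subseteq> {\<alpha><..<\<beta>}" "{t0 - e<..<t0 + e} \<times> P \<subseteq> U"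
    using e p0 unfolding P_def by blast+
  have P: "open P" "convex P" by (auto simp: P_def)
  have A': "\<forall>t\<in>{t0 - e<..<t0 + e}. \<tau> t \<noteq> 0 \<and> (A has_real_derivative 1 / \<tau> t) (at t)"
    using A sub(1) by blast
  have "t0 - e < t0 - e / 2" using \<open>e > 0\<close> by simp
  note sol = linear_ode_solution[OF P this A' smooth1_on_subset[OF As sub(1)]
      smooth1_on_subset[OF \<tau>(1) subset_UNIV] smooth2_on_subset[OF \<rho> sub(2)]]
  show ?thesis
  proof (rule that[OF _ P(1) _ p0 _ _ sol])
    show "open {t0 - e / 2<..<t0 + e}" "t0 \<in> {t0 - e / 2<..<t0 + e}"
      using \<open>e > 0\<close> by auto
    show "{t0 - e / 2<..<t0 + e} \<times> P \<subseteq> U" "\<forall>t\<in>{t0 - e / 2<..<t0 + e}. \<tau> t \<noteq> 0"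
      using sub(2) A' by auto
  qed
qed

text \<open>Along the level sets of a first integral \<open>\<phi>\<close> of \<open>\<tau> \<partial>\<^sub>t + \<xi> \<partial>\<^sub>x\<close>, the transport
  equation reduces to the ordinary differential equation solved by \<open>V\<close>.\<close>
lemma frechet_derivative_along_first_integral:
  fixes V \<phi> :: "real \<times> real \<Rightarrow> real"
  assumes V': "(V has_derivative
      (\<lambda>h. (k * V (t, \<phi> (t, x)) - \<rho> (t, \<phi> (t, x))) / \<tau> t * fst h + Vp * snd h)) (at (t, \<phi> (t, x)))"
    and \<phi>': "(\<phi> has_derivative (\<lambda>h. \<phi>t * fst h + \<phi>x * snd h)) (at (t, x))"
    and first_integral: "\<tau> t * \<phi>t + \<xi> x * \<phi>x = 0" and "\<tau> t \<noteq> 0"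
  shows "frechet_derivative (\<lambda>q. V (fst q, \<phi> q)) (at (t, x)) (\<tau> t, \<xi> x)
    = k * V (t, \<phi> (t, x)) - \<rho> (t, \<phi> (t, x))"
proof -
  have "((\<lambda>q. (fst q, \<phi> q)) has_derivative (\<lambda>h. (fst h, \<phi>t * fst h + \<phi>x * snd h))) (at (t, x))"
    by (intro has_derivative_Pair has_derivative_fst has_derivative_ident \<phi>')
  moreover have "(V has_derivative
      (\<lambda>h. (k * V (t, \<phi> (t, x)) - \<rho> (t, \<phi> (t, x))) / \<tau> t * fst h + Vp * snd h))
      (at ((\<lambda>q. (fst q, \<phi> q)) (t, x)))"
    using V' by simp
  ultimately have D: "((\<lambda>q. V (fst q, \<phi> q)) has_derivative (\<lambda>h.
      (k * V (t, \<phi> (t, x)) - \<rho> (t, \<phi> (t, x))) / \<tau> t * fst h + Vp * (\<phi>t * fst h + \<phi>x * snd h))) (at (t, x))"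
    by (rule has_derivative_eq_rhs[OF has_derivative_compose]) (simp add: fun_eq_iff)
  have "frechet_derivative (\<lambda>q. V (fst q, \<phi> q)) (at (t, x)) (\<tau> t, \<xi> x)
      = (k * V (t, \<phi> (t, x)) - \<rho> (t, \<phi> (t, x))) / \<tau> t * \<tau> t + Vp * (\<tau> t * \<phi>t + \<xi> x * \<phi>x)"
    by (simp add: frechet_derivative_at[OF D, symmetric] algebra_simps)
  then show ?thesis using first_integral \<open>\<tau> t \<noteq> 0\<close> by simp
qed

lemma smooth2_on_compose_smooth1:
  assumes "smooth1_on K g" "smooth2_on S h" "\<forall>p\<in>S. h p \<in> K"
  shows "smooth2_on S (\<lambda>p. g (h p))"
  using smooth2_on_compose[OF smooth2_on_compose_fst[OF assms(1), of "K \<times> UNIV"] assms(2)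
      smooth2_on_const[of S 0]] assms(3)
  by auto

lemma transport_equation_local_solution:
  fixes \<tau> \<xi> :: "real \<Rightarrow> real" and r \<rho> \<phi> \<phi>t \<phi>x :: "real \<times> real \<Rightarrow> real"
  assumes \<tau>: "smooth1_on UNIV \<tau>" "\<tau> t1 \<noteq> 0" and W: "open W" "(t1, x1) \<in> W"
    and \<phi>: "smooth2_on W \<phi>"
    and first_integral: "\<forall>q\<in>W. (\<phi> has_derivative (\<lambda>h. \<phi>t q * fst h + \<phi>x q * snd h)) (at q) \<and>
      \<tau> (fst q) * \<phi>t q + \<xi> (snd q) * \<phi>x q = 0"
    and U: "open U" "(t1, \<phi> (t1, x1)) \<in> U" "smooth2_on U \<rho>"
    and \<rho>: "\<forall>q\<in>W. (fst q, \<phi> q) \<in> U \<longrightarrow> \<rho> (fst q, \<phi> q) = r q"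
  obtains I J Y where "open I" "open J" "t1 \<in> I" "x1 \<in> J" "I \<times> J \<subseteq> W" "smooth2_on (I \<times> J) Y"
    "\<forall>t\<in>I. \<forall>x\<in>J. frechet_derivative Y (at (t, x)) (\<tau> t, \<xi> x) = k * Y (t, x) - r (t, x)"
proof -
  obtain I P V where "open I" "open P" "t1 \<in> I" "\<phi> (t1, x1) \<in> P" and IP: "I \<times> P \<subseteq> U"
    and \<tau>I: "\<forall>t\<in>I. \<tau> t \<noteq> 0" and V: "smooth2_on (I \<times> P) V"
    and V': "\<forall>q\<in>I \<times> P. \<exists>Vp. (V has_derivative (\<lambda>h. (k * V q - \<rho> q) / \<tau> (fst q) * fst h + Vp * snd h)) (at q)"
    using linear_ode_local_solution[OF \<tau> U] by blast
  define N where "N = (\<lambda>q. (fst q, \<phi> q)) -` (I \<times> P) \<inter> W"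
  have "continuous_on W (\<lambda>q. (fst q, \<phi> q))"
    using smooth2_on_continuous_on[OF \<phi>] by (intro continuous_intros)
  then have "open N"
    using W(1) \<open>open I\<close> \<open>open P\<close> by (simp add: N_def continuous_on_open_vimage open_Times)
  moreover have "(t1, x1) \<in> N" using W(2) \<open>t1 \<in> I\<close> \<open>\<phi> (t1, x1) \<in> P\<close> by (simp add: N_def)
  ultimately obtain e where "e > 0" and e: "{t1 - e<..<t1 + e} \<times> {x1 - e<..<x1 + e} \<subseteq> N"
    by (rule open_contains_square)
  define I' J' where "I' = {t1 - e<..<t1 + e}" and "J' = {x1 - e<..<x1 + e}"
  have in_N: "(t, x) \<in> W" "t \<in> I" "\<phi> (t, x) \<in> P" if "t \<in> I'" "x \<in> J'" for t x
  proof -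
    have "(t, x) \<in> N" using e that unfolding I'_def J'_def by blast
    then show "(t, x) \<in> W" "t \<in> I" "\<phi> (t, x) \<in> P" by (auto simp: N_def)
  qed
  define Y where "Y = (\<lambda>q. V (fst q, \<phi> q))"
  have "frechet_derivative Y (at (t, x)) (\<tau> t, \<xi> x) = k * Y (t, x) - r (t, x)"
    if tx: "t \<in> I'" "x \<in> J'" for t x
  proof -
    obtain Vp where "(V has_derivative
        (\<lambda>h. (k * V (t, \<phi> (t, x)) - \<rho> (t, \<phi> (t, x))) / \<tau> t * fst h + Vp * snd h)) (at (t, \<phi> (t, x)))"
      using V' in_N[OF tx] by fastforce
    moreover have "(\<phi> has_derivative (\<lambda>h. \<phi>t (t, x) * fst h + \<phi>x (t, x) * snd h)) (at (t, x))"
      "\<tau> t * \<phi>t (t, x) + \<xi> x * \<phi>x (t, x) = 0"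
      using first_integral in_N(1)[OF tx] by auto
    moreover have "\<tau> t \<noteq> 0" using \<tau>I in_N(2)[OF tx] by blast
    ultimately have "frechet_derivative Y (at (t, x)) (\<tau> t, \<xi> x)
        = k * V (t, \<phi> (t, x)) - \<rho> (t, \<phi> (t, x))"
      unfolding Y_def by (rule frechet_derivative_along_first_integral)
    moreover have "\<rho> (t, \<phi> (t, x)) = r (t, x)" using \<rho> in_N[OF tx] IP by fastforce
    ultimately show ?thesis by (simp add: Y_def)
  qed
  moreover have "smooth2_on (I' \<times> J') Y"
    unfolding Y_def using in_N by (intro smooth2_on_compose[OF V smooth2_on_fst smooth2_on_subset[OF \<phi>]]) auto
  moreover have "open I'" "open J'" "t1 \<in> I'" "x1 \<in> J'" "I' \<times> J' \<subseteq> W"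
    using in_N \<open>e > 0\<close> by (auto simp: I'_def J'_def)
  ultimately show ?thesis using that by blast
qed

lemma transport_equation_local_solution_nondegenerate:
  fixes \<tau> \<xi> :: "real \<Rightarrow> real" and r :: "real \<times> real \<Rightarrow> real"
  assumes \<tau>: "smooth1_on UNIV \<tau>" "\<tau> t1 \<noteq> 0" and \<xi>: "smooth1_on UNIV \<xi>" "\<xi> x1 \<noteq> 0"
    and r: "smooth2_on UNIV r" and W: "open W" "(t1, x1) \<in> W"
  obtains I J Y where "open I" "open J" "t1 \<in> I" "x1 \<in> J" "I \<times> J \<subseteq> W" "smooth2_on (I \<times> J) Y"
    "\<forall>t\<in>I. \<forall>x\<in>J. frechet_derivative Y (at (t, x)) (\<tau> t, \<xi> x) = k * Y (t, x) - r (t, x)"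
proof -
  obtain \<alpha> \<beta> A where "\<alpha> < t1" "t1 < \<beta>"
    and A: "\<forall>t\<in>{\<alpha><..<\<beta>}. \<tau> t \<noteq> 0 \<and> (A has_real_derivative 1 / \<tau> t) (at t)"
    and As: "smooth1_on {\<alpha><..<\<beta>} A"
    using smooth_antiderivative_of_reciprocal[OF \<tau>] by blast
  obtain \<gamma> \<delta> B where "\<gamma> < x1" "x1 < \<delta>"
    and B: "\<forall>x\<in>{\<gamma><..<\<delta>}. \<xi> x \<noteq> 0 \<and> (B has_real_derivative 1 / \<xi> x) (at x)"
    and Bs: "smooth1_on {\<gamma><..<\<delta>} B"
    using smooth_antiderivative_of_reciprocal[OF \<xi>] by blast
  define g where "g = the_inv_into {\<gamma><..<\<delta>} B"
  have "\<forall>x\<in>{\<gamma><..<\<delta>}. (B has_real_derivative 1 / \<xi> x) (at x) \<and> 1 / \<xi> x \<noteq> 0" using B by simp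
  note g = smooth1_on_inverse_on_interval[OF this Bs, folded g_def]
  text \<open>In the coordinates \<open>(t, p)\<close> with \<open>p = A t - B x\<close> the field \<open>\<tau> \<partial>\<^sub>t + \<xi> \<partial>\<^sub>x\<close>
    becomes \<open>\<tau> \<partial>\<^sub>t\<close>; \<open>x\<close> is recovered from \<open>(t, p)\<close> through the inverse \<open>g\<close> of \<open>B\<close>.\<close>
  define W' where "W' = W \<inter> {\<alpha><..<\<beta>} \<times> {\<gamma><..<\<delta>}"
  define \<phi> where "\<phi> q = A (fst q) - B (snd q)" for q
  define U where "U = (\<lambda>q. A (fst q) - snd q) -` (B ` {\<gamma><..<\<delta>}) \<inter> {\<alpha><..<\<beta>} \<times> UNIV"
  define \<rho> where "\<rho> q = r (fst q, g (A (fst q) - snd q))" for q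
  have "open W'" unfolding W'_def using W(1) by (intro open_Int open_Times) auto
  moreover have "(t1, x1) \<in> W'"
    using W(2) \<open>\<alpha> < t1\<close> \<open>t1 < \<beta>\<close> \<open>\<gamma> < x1\<close> \<open>x1 < \<delta>\<close> by (simp add: W'_def)
  moreover have "smooth2_on W' \<phi>"
    unfolding \<phi>_def by (intro smooth2_on_diff smooth2_on_compose_fst[OF As] smooth2_on_compose_snd[OF Bs])
      (auto simp: W'_def)
  moreover have "\<forall>q\<in>W'. (\<phi> has_derivative (\<lambda>h. 1 / \<tau> (fst q) * fst h + - (1 / \<xi> (snd q)) * snd h)) (at q) \<and>
      \<tau> (fst q) * (1 / \<tau> (fst q)) + \<xi> (snd q) * - (1 / \<xi> (snd q)) = 0"
  proof
    fix q assume "q \<in> W'"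
    then have "(A has_real_derivative 1 / \<tau> (fst q)) (at (fst q))"
      "(B has_real_derivative 1 / \<xi> (snd q)) (at (snd q))" "\<tau> (fst q) \<noteq> 0" "\<xi> (snd q) \<noteq> 0"
      using A B by (auto simp: W'_def)
    from has_derivative_diff[OF has_derivative_compose_fst[OF this(1)] has_derivative_compose_snd[OF this(2)]]
      this(3,4)
    show "(\<phi> has_derivative (\<lambda>h. 1 / \<tau> (fst q) * fst h + - (1 / \<xi> (snd q)) * snd h)) (at q) \<and>
      \<tau> (fst q) * (1 / \<tau> (fst q)) + \<xi> (snd q) * - (1 / \<xi> (snd q)) = 0"
      by (simp add: \<phi>_def[abs_def])
  qed
  moreover have "open U"
  proof -
    have "continuous_on ({\<alpha><..<\<beta>} \<times> UNIV) (\<lambda>q. A (fst q) - snd q)"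
      by (intro continuous_intros continuous_on_compose2[OF smooth1_on_continuous_on[OF As]]) auto
    then show ?thesis
      using g(1) by (auto simp: U_def continuous_on_open_vimage open_Times)
  qed
  moreover have "(t1, \<phi> (t1, x1)) \<in> U"
    using \<open>\<alpha> < t1\<close> \<open>t1 < \<beta>\<close> \<open>\<gamma> < x1\<close> \<open>x1 < \<delta>\<close> by (auto simp: U_def \<phi>_def)
  moreover have "smooth2_on U \<rho>"
    unfolding \<rho>_def
    by (intro smooth2_on_compose[OF r smooth2_on_fst] smooth2_on_compose_smooth1[OF g(2)]
        smooth2_on_diff smooth2_on_compose_fst[OF As] smooth2_on_snd) (auto simp: U_def)
  moreover have "\<forall>q\<in>W'. (fst q, \<phi> q) \<in> U \<longrightarrow> \<rho> (fst q, \<phi> q) = r q"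
    by (auto simp: W'_def \<rho>_def \<phi>_def g(3))
  ultimately obtain I J Y where "open I" "open J" "t1 \<in> I" "x1 \<in> J" "I \<times> J \<subseteq> W'"
    "smooth2_on (I \<times> J) Y"
    "\<forall>t\<in>I. \<forall>x\<in>J. frechet_derivative Y (at (t, x)) (\<tau> t, \<xi> x) = k * Y (t, x) - r (t, x)"
    by (rule transport_equation_local_solution[OF \<tau>])
  then show ?thesis using that by (auto simp: W'_def)
qed

lemma transport_equation_local_solution_axial:
  fixes \<tau> \<xi> :: "real \<Rightarrow> real" and r :: "real \<times> real \<Rightarrow> real"
  assumes \<tau>: "smooth1_on UNIV \<tau>" "\<tau> t1 \<noteq> 0" and r: "smooth2_on UNIV r"
    and W: "open W" "(t1, x1) \<in> W" and \<xi>: "\<forall>x. (t1, x) \<in> W \<longrightarrow> \<xi> x = 0"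
  obtains I J Y where "open I" "open J" "t1 \<in> I" "x1 \<in> J" "I \<times> J \<subseteq> W" "smooth2_on (I \<times> J) Y"
    "\<forall>t\<in>I. \<forall>x\<in>J. frechet_derivative Y (at (t, x)) (\<tau> t, \<xi> x) = k * Y (t, x) - r (t, x)"
proof -
  define W' where "W' = W \<inter> UNIV \<times> Pair t1 -` W"
  have "open W'"
    unfolding W'_def using W(1) by (intro open_Int open_Times open_vimage continuous_intros) auto
  moreover have "(t1, x1) \<in> W'" using W(2) by (simp add: W'_def)
  moreover have "\<forall>q\<in>W'. (snd has_derivative (\<lambda>h. 0 * fst h + 1 * snd h)) (at q) \<and>
      \<tau> (fst q) * 0 + \<xi> (snd q) * 1 = 0"
    using \<xi> by (auto simp: W'_def intro: has_derivative_eq_rhs[OF has_derivative_snd[OF has_derivative_ident]])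
  ultimately obtain I J Y where "open I" "open J" "t1 \<in> I" "x1 \<in> J" "I \<times> J \<subseteq> W'"
    "smooth2_on (I \<times> J) Y"
    "\<forall>t\<in>I. \<forall>x\<in>J. frechet_derivative Y (at (t, x)) (\<tau> t, \<xi> x) = k * Y (t, x) - r (t, x)"
    by (rule transport_equation_local_solution[OF \<tau> _ _ smooth2_on_snd _ open_UNIV _ r]) auto
  then show ?thesis using that by (auto simp: W'_def)
qed

definition reducible_on ::
  "(real \<Rightarrow> real) \<Rightarrow> (real \<Rightarrow> real) \<Rightarrow> (real \<times> real \<Rightarrow> real) \<Rightarrow> real \<Rightarrow> real set \<Rightarrow> real set \<Rightarrow> bool"
where
  "reducible_on \<tau> \<xi> r k I J \<longleftrightarrow> (\<exists>T X Y m c F. m \<noteq> 0 \<and> c \<noteq> 0 \<and> smooth2_on (I \<times> J) Y \<and>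
     smooth1_on I T \<and> smooth1_on J X \<and> (\<forall>t\<in>I. deriv T t \<noteq> 0) \<and> (\<forall>x\<in>J. deriv X x \<noteq> 0) \<and>
     canonical_form F (T ` I \<times> X ` J) \<and>
     (\<forall>t\<in>I. \<forall>x\<in>J. \<forall>u.
        (deriv T t * \<tau> t, deriv X x * \<xi> x,
         frechet_derivative Y (at (t, x)) (\<tau> t, \<xi> x) + m * (k * u + r (t, x)))
        = c *\<^sub>R F (T t, X x, m * u + Y (t, x))))"

definition locally_reducible ::
  "(real \<Rightarrow> real) \<Rightarrow> (real \<Rightarrow> real) \<Rightarrow> (real \<times> real \<Rightarrow> real) \<Rightarrow> real \<Rightarrow> (real \<times> real) set \<Rightarrow> bool"
where
  "locally_reducible \<tau> \<xi> r k W \<longleftrightarrow>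
     (\<exists>I J. open I \<and> open J \<and> I \<noteq> {} \<and> J \<noteq> {} \<and> I \<times> J \<subseteq> W \<and> reducible_on \<tau> \<xi> r k I J)"

lemma reducible_onI:
  assumes "m \<noteq> 0" "c \<noteq> 0" "smooth2_on (I \<times> J) Y" "smooth1_on I T" "smooth1_on J X"
    "\<forall>t\<in>I. deriv T t \<noteq> 0" "\<forall>x\<in>J. deriv X x \<noteq> 0" "canonical_form F (T ` I \<times> X ` J)"
    "\<forall>t\<in>I. \<forall>x\<in>J. \<forall>u.
       (deriv T t * \<tau> t, deriv X x * \<xi> x, frechet_derivative Y (at (t, x)) (\<tau> t, \<xi> x) + m * (k * u + r (t, x)))
       = c *\<^sub>R F (T t, X x, m * u + Y (t, x))"
  shows "reducible_on \<tau> \<xi> r k I J"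
  unfolding reducible_on_def
  by (intro exI[of _ T] exI[of _ X] exI[of _ Y] exI[of _ m] exI[of _ c] exI[of _ F] conjI assms)

lemma locally_reducibleI:
  "open I \<Longrightarrow> open J \<Longrightarrow> t \<in> I \<Longrightarrow> x \<in> J \<Longrightarrow> I \<times> J \<subseteq> W \<Longrightarrow> reducible_on \<tau> \<xi> r k I J \<Longrightarrow>
    locally_reducible \<tau> \<xi> r k W"
  unfolding locally_reducible_def by blast

lemma canonical_form_translation:
  assumes "\<epsilon> \<in> {0, 1}" "d \<in> {0, 1}"
  shows "canonical_form (\<lambda>(t, x, u). (1, d, \<epsilon> * u)) D"
proof (cases "d = 0")
  case True
  then show ?thesis using assms(1) unfolding canonical_form_def by blast
next
  case False
  then have "d = 1" using assms(2) by simp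
  then show ?thesis using assms(1) unfolding canonical_form_def by blast
qed

lemma canonical_form_vertical: "p \<in> D \<Longrightarrow> g p \<noteq> 0 \<Longrightarrow> canonical_form (\<lambda>(t, x, u). (0, 0, g (t, x))) D"
  unfolding canonical_form_def by blast

lemma canonical_form_scaling: "canonical_form (\<lambda>(t, x, u). (0, 0, u)) D"
  unfolding canonical_form_def by blast

text \<open>Once the transport equation \<open>\<tau> Y\<^sub>t + \<xi> Y\<^sub>x = k Y - r\<close> is solved, \<open>v = u + Y\<close> turns the
  \<open>u\<close>-component into \<open>k v\<close>; straightening \<open>\<tau> \<partial>\<^sub>t\<close> by \<open>T = c A\<close> with \<open>A' = 1 / \<tau>\<close> and
  dividing by \<open>c\<close> (\<open>c = k\<close> unless \<open>k = 0\<close>) leaves \<open>\<partial>\<^sub>t + d \<partial>\<^sub>x + \<epsilon> v \<partial>\<^sub>v\<close>.\<close>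
lemma reducible_on_if_transport_solution:
  fixes A X :: "real \<Rightarrow> real"
  assumes "open I" "open J"
    and A: "\<forall>t\<in>I. \<tau> t \<noteq> 0 \<and> (A has_real_derivative 1 / \<tau> t) (at t)" "smooth1_on I A"
    and X: "smooth1_on J X" "\<forall>x\<in>J. deriv X x \<noteq> 0 \<and> deriv X x * \<xi> x = d" and d: "d \<in> {0, 1}"
    and Y: "smooth2_on (I \<times> J) Y"
      "\<forall>t\<in>I. \<forall>x\<in>J. frechet_derivative Y (at (t, x)) (\<tau> t, \<xi> x) = k * Y (t, x) - r (t, x)"
  shows "reducible_on \<tau> \<xi> r k I J"
proof -
  obtain c \<epsilon> :: real where c: "c \<noteq> 0" "\<epsilon> \<in> {0, 1}" "c * \<epsilon> = k"
  proof (cases "k = 0")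
    case True
    then show ?thesis using that[of 1 0] by simp
  next
    case False
    then show ?thesis using that[of k 1] by simp
  qed
  obtain X' where X': "\<forall>x\<in>J. (X has_real_derivative X' x) (at x)" using X(1) by (rule smooth1_onE)
  have dT: "deriv (\<lambda>t. c * A t) t = c / \<tau> t" if "t \<in> I" for t
    using DERIV_imp_deriv[OF DERIV_cmult[OF A(1)[rule_format, OF that, THEN conjunct2]]] by simp
  have dX: "deriv (\<lambda>x. c * X x) x = c * deriv X x" if "x \<in> J" for x
    using DERIV_imp_deriv[OF DERIV_cmult[OF X'[rule_format, OF that]]] DERIV_imp_deriv[OF X'[rule_format, OF that]]
    by simp
  have "smooth1_on I (\<lambda>t. c * A t)" by (rule smooth1_on_mult[OF \<open>open I\<close> smooth1_on_const A(2)])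
  moreover have "smooth1_on J (\<lambda>x. c * X x)" by (rule smooth1_on_mult[OF \<open>open J\<close> smooth1_on_const X(1)])
  moreover have "\<forall>t\<in>I. deriv (\<lambda>t. c * A t) t \<noteq> 0" using A(1) dT c(1) by simp
  moreover have "\<forall>x\<in>J. deriv (\<lambda>x. c * X x) x \<noteq> 0" using X(2) dX c(1) by simp
  moreover have "\<forall>t\<in>I. \<forall>x\<in>J. \<forall>u. (deriv (\<lambda>t. c * A t) t * \<tau> t, deriv (\<lambda>x. c * X x) x * \<xi> x,
        frechet_derivative Y (at (t, x)) (\<tau> t, \<xi> x) + 1 * (k * u + r (t, x)))
      = c *\<^sub>R (\<lambda>(t, x, u). (1, d, \<epsilon> * u)) (c * A t, c * X x, 1 * u + Y (t, x))"
  proof (intro ballI allI)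
    fix t x u assume "t \<in> I" "x \<in> J"
    with A(1) X(2) Y(2) dT dX have "\<tau> t \<noteq> 0" "deriv X x * \<xi> x = d"
      "frechet_derivative Y (at (t, x)) (\<tau> t, \<xi> x) = k * Y (t, x) - r (t, x)"
      "deriv (\<lambda>t. c * A t) t = c / \<tau> t" "deriv (\<lambda>x. c * X x) x = c * deriv X x"
      by auto
    then show "(deriv (\<lambda>t. c * A t) t * \<tau> t, deriv (\<lambda>x. c * X x) x * \<xi> x,
        frechet_derivative Y (at (t, x)) (\<tau> t, \<xi> x) + 1 * (k * u + r (t, x)))
      = c *\<^sub>R (\<lambda>(t, x, u). (1, d, \<epsilon> * u)) (c * A t, c * X x, 1 * u + Y (t, x))"
      by (simp add: algebra_simps flip: c(3))
  qed
  ultimately show ?thesis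
    by (rule reducible_onI[OF one_neq_zero c(1) Y(1) _ _ _ _ canonical_form_translation[OF c(2) d]])
qed

lemma locally_reducible_diagonal:
  assumes \<tau>: "smooth1_on UNIV \<tau>" "\<tau> t1 \<noteq> 0" and \<xi>: "smooth1_on UNIV \<xi>" "\<xi> x1 \<noteq> 0"
    and r: "smooth2_on UNIV r" and W: "open W" "(t1, x1) \<in> W"
  shows "locally_reducible \<tau> \<xi> r k W"
proof -
  obtain \<alpha> \<beta> A where "\<alpha> < t1" "t1 < \<beta>"
    and A: "\<forall>t\<in>{\<alpha><..<\<beta>}. \<tau> t \<noteq> 0 \<and> (A has_real_derivative 1 / \<tau> t) (at t)"
    and As: "smooth1_on {\<alpha><..<\<beta>} A"
    using smooth_antiderivative_of_reciprocal[OF \<tau>] by blast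
  obtain \<gamma> \<delta> B where "\<gamma> < x1" "x1 < \<delta>"
    and B: "\<forall>x\<in>{\<gamma><..<\<delta>}. \<xi> x \<noteq> 0 \<and> (B has_real_derivative 1 / \<xi> x) (at x)"
    and Bs: "smooth1_on {\<gamma><..<\<delta>} B"
    using smooth_antiderivative_of_reciprocal[OF \<xi>] by blast
  have "open (W \<inter> {\<alpha><..<\<beta>} \<times> {\<gamma><..<\<delta>})" using W(1) by (intro open_Int open_Times) auto
  moreover have "(t1, x1) \<in> W \<inter> {\<alpha><..<\<beta>} \<times> {\<gamma><..<\<delta>}"
    using W(2) \<open>\<alpha> < t1\<close> \<open>t1 < \<beta>\<close> \<open>\<gamma> < x1\<close> \<open>x1 < \<delta>\<close> by simp
  ultimately obtain I J Y where IJ: "open I" "open J" "t1 \<in> I" "x1 \<in> J"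
    and sub: "I \<times> J \<subseteq> W \<inter> {\<alpha><..<\<beta>} \<times> {\<gamma><..<\<delta>}" and Y: "smooth2_on (I \<times> J) Y"
    "\<forall>t\<in>I. \<forall>x\<in>J. frechet_derivative Y (at (t, x)) (\<tau> t, \<xi> x) = k * Y (t, x) - r (t, x)"
    by (rule transport_equation_local_solution_nondegenerate[OF \<tau> \<xi> r])
  have IA: "I \<subseteq> {\<alpha><..<\<beta>}" using sub \<open>x1 \<in> J\<close> by blast
  have JB: "J \<subseteq> {\<gamma><..<\<delta>}" using sub \<open>t1 \<in> I\<close> by blast
  have A': "\<forall>t\<in>I. \<tau> t \<noteq> 0 \<and> (A has_real_derivative 1 / \<tau> t) (at t)" using A IA by blast
  have B': "\<forall>x\<in>J. deriv B x \<noteq> 0 \<and> deriv B x * \<xi> x = 1"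
  proof
    fix x assume "x \<in> J"
    with B JB have "\<xi> x \<noteq> 0" "deriv B x = 1 / \<xi> x" by (auto intro: DERIV_imp_deriv)
    then show "deriv B x \<noteq> 0 \<and> deriv B x * \<xi> x = 1" by simp
  qed
  have "reducible_on \<tau> \<xi> r k I J"
    by (rule reducible_on_if_transport_solution[OF IJ(1,2) A' smooth1_on_subset[OF As IA]
          smooth1_on_subset[OF Bs JB] B' _ Y]) simp
  moreover have "I \<times> J \<subseteq> W" using sub by blast
  ultimately show ?thesis using locally_reducibleI[OF IJ] by blast
qed

lemma locally_reducible_axial:
  assumes \<tau>: "smooth1_on UNIV \<tau>" "\<tau> t1 \<noteq> 0" and r: "smooth2_on UNIV r"
    and W: "open W" "(t1, x1) \<in> W" and \<xi>: "\<forall>x. (t1, x) \<in> W \<longrightarrow> \<xi> x = 0"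
  shows "locally_reducible \<tau> \<xi> r k W"
proof -
  obtain \<alpha> \<beta> A where "\<alpha> < t1" "t1 < \<beta>"
    and A: "\<forall>t\<in>{\<alpha><..<\<beta>}. \<tau> t \<noteq> 0 \<and> (A has_real_derivative 1 / \<tau> t) (at t)"
    and As: "smooth1_on {\<alpha><..<\<beta>} A"
    using smooth_antiderivative_of_reciprocal[OF \<tau>] by blast
  have "open (W \<inter> {\<alpha><..<\<beta>} \<times> UNIV)" using W(1) by (intro open_Int open_Times) auto
  moreover have "(t1, x1) \<in> W \<inter> {\<alpha><..<\<beta>} \<times> UNIV" using W(2) \<open>\<alpha> < t1\<close> \<open>t1 < \<beta>\<close> by simp
  moreover have "\<forall>x. (t1, x) \<in> W \<inter> {\<alpha><..<\<beta>} \<times> UNIV \<longrightarrow> \<xi> x = 0" using \<xi> by blast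
  ultimately obtain I J Y where IJ: "open I" "open J" "t1 \<in> I" "x1 \<in> J"
    and sub: "I \<times> J \<subseteq> W \<inter> {\<alpha><..<\<beta>} \<times> UNIV" and Y: "smooth2_on (I \<times> J) Y"
    "\<forall>t\<in>I. \<forall>x\<in>J. frechet_derivative Y (at (t, x)) (\<tau> t, \<xi> x) = k * Y (t, x) - r (t, x)"
    by (rule transport_equation_local_solution_axial[OF \<tau> r])
  have IA: "I \<subseteq> {\<alpha><..<\<beta>}" using sub \<open>x1 \<in> J\<close> by blast
  have A': "\<forall>t\<in>I. \<tau> t \<noteq> 0 \<and> (A has_real_derivative 1 / \<tau> t) (at t)" using A IA by blast
  have "\<forall>x\<in>J. deriv (\<lambda>x. x) x \<noteq> 0 \<and> deriv (\<lambda>x. x) x * \<xi> x = 0"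
    using \<xi> sub \<open>t1 \<in> I\<close> DERIV_imp_deriv[OF DERIV_ident] by auto
  then have "reducible_on \<tau> \<xi> r k I J"
    by (rule reducible_on_if_transport_solution[OF IJ(1,2) A' smooth1_on_subset[OF As IA]
          smooth1_on_ident[OF IJ(2)] _ _ Y]) simp
  moreover have "I \<times> J \<subseteq> W" using sub by blast
  ultimately show ?thesis using locally_reducibleI[OF IJ] by blast
qed

lemma reducible_on_vertical:
  assumes IJ: "open I" "open J" and \<tau>: "\<forall>t\<in>I. \<tau> t = 0" and \<xi>: "\<forall>x\<in>J. \<xi> x = 0"
    and r: "smooth2_on (I \<times> J) r" and p: "p \<in> I \<times> J" "k * u0 + r p \<noteq> 0"
  shows "reducible_on \<tau> \<xi> r k I J"
proof -
  have deriv_ident: "deriv (\<lambda>t. t) t = 1" for t :: real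
    using DERIV_imp_deriv[OF DERIV_ident] .
  have ident: "smooth1_on I (\<lambda>t. t)" "smooth1_on J (\<lambda>x. x)"
    "\<forall>t\<in>I. deriv (\<lambda>t. t) t \<noteq> 0" "\<forall>x\<in>J. deriv (\<lambda>x. x) x \<noteq> 0"
    using smooth1_on_ident IJ by (auto simp: deriv_ident)
  text \<open>With \<open>\<tau> = \<xi> = 0\<close> the operator is \<open>(k u + r) \<partial>\<^sub>u\<close>: for \<open>k \<noteq> 0\<close> the shift
    \<open>v = u + r / k\<close> gives \<open>k v \<partial>\<^sub>v\<close>, and for \<open>k = 0\<close> it is already \<open>r \<partial>\<^sub>u\<close>.\<close>
  show ?thesis
  proof (cases "k = 0")
    case True
    have "frechet_derivative (\<lambda>_. 0) (at q) = (\<lambda>_. 0 :: real)" for q :: "real \<times> real"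
      using frechet_derivative_at[OF has_derivative_const[of 0]] by simp
    then have eq: "\<forall>t\<in>I. \<forall>x\<in>J. \<forall>u. (deriv (\<lambda>t. t) t * \<tau> t, deriv (\<lambda>x. x) x * \<xi> x,
        frechet_derivative (\<lambda>_. 0) (at (t, x)) (\<tau> t, \<xi> x) + 1 * (k * u + r (t, x)))
      = 1 *\<^sub>R (\<lambda>(t, x, u). (0, 0, r (t, x))) (t, x, 1 * u + 0)"
      using True \<tau> \<xi> by (simp add: deriv_ident)
    have "canonical_form (\<lambda>(t, x, u). (0, 0, r (t, x))) ((\<lambda>t. t) ` I \<times> (\<lambda>x. x) ` J)"
      using p True by (intro canonical_form_vertical[of p]) auto
    from reducible_onI[OF one_neq_zero one_neq_zero smooth2_on_const ident this eq] show ?thesis .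
  next
    case False
    have Y: "smooth2_on (I \<times> J) (\<lambda>q. r q / k)"
      using smooth2_on_divide[OF r smooth2_on_const] False by auto
    have "frechet_derivative (\<lambda>q. r q / k) (at q) (0, 0) = 0" if "q \<in> I \<times> J" for q
    proof -
      obtain ya yb where "\<forall>q\<in>I \<times> J. ((\<lambda>q. r q / k) has_derivative (\<lambda>h. ya q * fst h + yb q * snd h)) (at q)"
        using Y by (rule smooth2_onE)
      with that have D: "((\<lambda>q. r q / k) has_derivative (\<lambda>h. ya q * fst h + yb q * snd h)) (at q)" by blast
      show ?thesis by (simp add: frechet_derivative_at[OF D, symmetric])
    qed
    then have "\<forall>t\<in>I. \<forall>x\<in>J. \<forall>u. (deriv (\<lambda>t. t) t * \<tau> t, deriv (\<lambda>x. x) x * \<xi> x,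
        frechet_derivative (\<lambda>q. r q / k) (at (t, x)) (\<tau> t, \<xi> x) + 1 * (k * u + r (t, x)))
      = k *\<^sub>R (\<lambda>(t, x, u). (0, 0, u)) (t, x, 1 * u + r (t, x) / k)"
      using False \<tau> \<xi> by (simp add: deriv_ident algebra_simps)
    then show ?thesis by (rule reducible_onI[OF one_neq_zero False Y ident canonical_form_scaling])
  qed
qed

lemma locally_reducible_vertical:
  assumes r: "smooth2_on UNIV r" and W: "open W" "(t0, x0) \<in> W" and nz: "k * u0 + r (t0, x0) \<noteq> 0"
    and vanish: "\<forall>t x. (t, x) \<in> W \<longrightarrow> \<tau> t = 0 \<and> \<xi> x = 0"
  shows "locally_reducible \<tau> \<xi> r k W"
proof -
  obtain e where "e > 0" and e: "{t0 - e<..<t0 + e} \<times> {x0 - e<..<x0 + e} \<subseteq> W"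
    using open_contains_square[OF W] by blast
  define I J where "I = {t0 - e<..<t0 + e}" and "J = {x0 - e<..<x0 + e}"
  have IJ: "open I" "open J" "t0 \<in> I" "x0 \<in> J" "I \<times> J \<subseteq> W"
    using \<open>e > 0\<close> e by (auto simp: I_def J_def)
  then have "\<forall>t\<in>I. \<tau> t = 0" "\<forall>x\<in>J. \<xi> x = 0"
    using vanish by blast+
  then have "reducible_on \<tau> \<xi> r k I J"
    by (rule reducible_on_vertical[OF IJ(1,2) _ _ smooth2_on_subset[OF r subset_UNIV], where p="(t0, x0)"])
      (use IJ(3,4) nz in auto)
  then show ?thesis by (rule locally_reducibleI[OF IJ])
qed

lemma reducible_on_swap:
  assumes "reducible_on \<xi> \<tau> (\<lambda>q. r (snd q, fst q)) k J I" "open I" "open J"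
  shows "\<exists>T X Y m c F. m \<noteq> 0 \<and> c \<noteq> 0 \<and> smooth2_on (I \<times> J) Y \<and>
    smooth1_on J T \<and> smooth1_on I X \<and> (\<forall>x\<in>J. deriv T x \<noteq> 0) \<and> (\<forall>t\<in>I. deriv X t \<noteq> 0) \<and>
    canonical_form F (T ` J \<times> X ` I) \<and>
    (\<forall>t\<in>I. \<forall>x\<in>J. \<forall>u.
       (deriv T x * \<xi> x, deriv X t * \<tau> t,
        frechet_derivative Y (at (t, x)) (\<tau> t, \<xi> x) + m * (k * u + r (t, x)))
       = c *\<^sub>R F (T x, X t, m * u + Y (t, x)))"
proof -
  obtain T X Y m c F where red: "m \<noteq> 0" "c \<noteq> 0" "smooth2_on (J \<times> I) Y" "smooth1_on J T" "smooth1_on I X"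
    "\<forall>x\<in>J. deriv T x \<noteq> 0" "\<forall>t\<in>I. deriv X t \<noteq> 0" "canonical_form F (T ` J \<times> X ` I)"
    and eq: "\<forall>x\<in>J. \<forall>t\<in>I. \<forall>u. (deriv T x * \<xi> x, deriv X t * \<tau> t,
        frechet_derivative Y (at (x, t)) (\<xi> x, \<tau> t) + m * (k * u + r (t, x)))
      = c *\<^sub>R F (T x, X t, m * u + Y (x, t))"
    using assms(1) unfolding reducible_on_def by auto
  obtain Ya Yb where Y': "\<forall>q\<in>J \<times> I. (Y has_derivative (\<lambda>h. Ya q * fst h + Yb q * snd h)) (at q)"
    using red(3) by (rule smooth2_onE)
  have "frechet_derivative (\<lambda>p. Y (snd p, fst p)) (at (t, x)) (\<tau> t, \<xi> x)
      = frechet_derivative Y (at (x, t)) (\<xi> x, \<tau> t)" if "t \<in> I" "x \<in> J" for t x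
    using frechet_derivative_at[OF has_derivative_swap[OF Y'[rule_format, of "(x, t)"]], symmetric]
      frechet_derivative_at[OF Y'[rule_format, of "(x, t)"], symmetric] that
    by (simp add: algebra_simps)
  moreover have "smooth2_on (I \<times> J) (\<lambda>p. Y (snd p, fst p))"
    by (rule smooth2_on_compose[OF red(3) smooth2_on_snd smooth2_on_fst]) auto
  ultimately show ?thesis
    by (intro exI[of _ T] exI[of _ X] exI[of _ "\<lambda>p. Y (snd p, fst p)"] exI[of _ m] exI[of _ c]
        exI[of _ F] conjI) (use red eq in auto)
qed

lemma locally_reducible_cases:
  fixes \<tau> \<xi> :: "real \<Rightarrow> real" and r :: "real \<times> real \<Rightarrow> real"
  assumes \<tau>: "smooth1_on UNIV \<tau>" and \<xi>: "smooth1_on UNIV \<xi>" and r: "smooth2_on UNIV r" and W: "open W"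
    and p0: "(t0, x0) \<in> W" and Q0: "(\<tau> t0, \<xi> x0, k * u0 + r (t0, x0)) \<noteq> (0, 0, 0)"
  shows "locally_reducible \<tau> \<xi> r k W \<or> locally_reducible \<xi> \<tau> (\<lambda>q. r (snd q, fst q)) k (prod.swap -` W)"
proof (cases "\<exists>t x. (t, x) \<in> W \<and> \<tau> t \<noteq> 0 \<and> \<xi> x \<noteq> 0")
  case True
  then obtain t1 x1 where "(t1, x1) \<in> W" "\<tau> t1 \<noteq> 0" "\<xi> x1 \<noteq> 0" by blast
  with locally_reducible_diagonal[OF \<tau> _ \<xi> _ r W] show ?thesis by blast
next
  case no_diagonal: False
  show ?thesis
  proof (cases "\<exists>t x. (t, x) \<in> W \<and> \<tau> t \<noteq> 0")
    case True
    then obtain t1 x1 where "(t1, x1) \<in> W" "\<tau> t1 \<noteq> 0" by blast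
    moreover from this no_diagonal have "\<forall>x. (t1, x) \<in> W \<longrightarrow> \<xi> x = 0" by blast
    ultimately show ?thesis using locally_reducible_axial[OF \<tau> _ r W] by blast
  next
    case \<tau>_vanishes: False
    show ?thesis
    proof (cases "\<exists>t x. (t, x) \<in> W \<and> \<xi> x \<noteq> 0")
      case True
      then obtain t1 x1 where "(x1, t1) \<in> prod.swap -` W" "\<xi> x1 \<noteq> 0" by auto
      moreover have "\<forall>t. (x1, t) \<in> prod.swap -` W \<longrightarrow> \<tau> t = 0" using \<tau>_vanishes by auto
      moreover have "smooth2_on UNIV (\<lambda>q. r (snd q, fst q))"
        by (rule smooth2_on_compose[OF r smooth2_on_snd smooth2_on_fst]) simp
      moreover have "open (prod.swap -` W)" using W by (intro open_vimage continuous_intros)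
      ultimately have "locally_reducible \<xi> \<tau> (\<lambda>q. r (snd q, fst q)) k (prod.swap -` W)"
        using locally_reducible_axial[OF \<xi>] by blast
      then show ?thesis ..
    next
      case False
      with \<tau>_vanishes have "\<forall>t x. (t, x) \<in> W \<longrightarrow> \<tau> t = 0 \<and> \<xi> x = 0" by blast
      moreover from this p0 Q0 have "k * u0 + r (t0, x0) \<noteq> 0" by auto
      ultimately show ?thesis using locally_reducible_vertical[OF r W p0] by blast
    qed
  qed
qed

theorem theorem4:
  fixes \<tau> \<xi> :: "real \<Rightarrow> real" and r :: "real \<times> real \<Rightarrow> real" and k :: real
    and W :: "(real \<times> real) set"
  assumes "smooth1_on UNIV \<tau>" and "smooth1_on UNIV \<xi>" and "smooth2_on UNIV r"
    and "open W"
    and "\<exists>t x u. (t,x) \<in> W \<and> (\<tau> t, \<xi> x, k * u + r (t,x)) \<noteq> (0,0,0)"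
  shows "\<exists>I J. open I \<and> open J \<and> I \<noteq> {} \<and> J \<noteq> {} \<and> I \<times> J \<subseteq> W \<and>
    (\<exists>T X Y m c F. m \<noteq> 0 \<and> c \<noteq> 0 \<and> smooth2_on (I \<times> J) Y \<and>
      ((smooth1_on I T \<and> smooth1_on J X \<and>
        (\<forall>t\<in>I. deriv T t \<noteq> 0) \<and> (\<forall>x\<in>J. deriv X x \<noteq> 0) \<and>
        canonical_form F (T ` I \<times> X ` J) \<and>
        (\<forall>t\<in>I. \<forall>x\<in>J. \<forall>u.
           (deriv T t * \<tau> t, deriv X x * \<xi> x,
            frechet_derivative Y (at (t,x)) (\<tau> t, \<xi> x) + m * (k * u + r (t,x)))
           = c *\<^sub>R F (T t, X x, m * u + Y (t,x))))
       \<or>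
       (smooth1_on J T \<and> smooth1_on I X \<and>
        (\<forall>x\<in>J. deriv T x \<noteq> 0) \<and> (\<forall>t\<in>I. deriv X t \<noteq> 0) \<and>
        canonical_form F (T ` J \<times> X ` I) \<and>
        (\<forall>t\<in>I. \<forall>x\<in>J. \<forall>u.
           (deriv T x * \<xi> x, deriv X t * \<tau> t,
            frechet_derivative Y (at (t,x)) (\<tau> t, \<xi> x) + m * (k * u + r (t,x)))
           = c *\<^sub>R F (T x, X t, m * u + Y (t,x))))))"
proof -
  obtain t0 x0 u0 where "(t0, x0) \<in> W" "(\<tau> t0, \<xi> x0, k * u0 + r (t0, x0)) \<noteq> (0, 0, 0)"
    using assms(5) by blast
  from locally_reducible_cases[OF assms(1-4) this] show ?thesis
  proof
    assume "locally_reducible \<tau> \<xi> r k W"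
    then show ?thesis
      unfolding locally_reducible_def reducible_on_def conj_disj_distribL ex_disj_distrib
      by (rule disjI1)
  next
    assume "locally_reducible \<xi> \<tau> (\<lambda>q. r (snd q, fst q)) k (prod.swap -` W)"
    then obtain J I where IJ: "open I" "open J" "I \<noteq> {}" "J \<noteq> {}" "J \<times> I \<subseteq> prod.swap -` W"
      and red: "reducible_on \<xi> \<tau> (\<lambda>q. r (snd q, fst q)) k J I"
      unfolding locally_reducible_def by blast
    have "I \<times> J \<subseteq> W" using IJ(5) by auto
    with IJ(1-4) reducible_on_swap[OF red IJ(1,2)] show ?thesis
      unfolding conj_disj_distribL ex_disj_distrib
      by (intro disjI2 exI[of _ I] exI[of _ J] conjI) assumption+
  qed
qed

end
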